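(* Under the standing assumptions, there exists $\Lambda>0$ such that for every $\lambda>\Lambda$ the BBM-type operator $\mathcal{A}^\lambda$ has no eigenvalues in $\{z\in\mathbb{C}:\operatorname{Re}z\le0\}$.
   Context: Standing assumptions: $f:\mathbb{R}\to\mathbb{R}$ is $C^1$ with $f(0)=f'(0)=0$. $\mathcal{M}$ is the Fourier multiplier with symbol $\alpha:\mathbb{R}\to[0,\infty)$, locally bounded, with $a|k|^m\le\alpha(k)\le b|k|^m$ for all large $|k|$ ($m\ge1$, $a,b>0$). $c>1$ and $u_c\in H^m(\mathbb{R})$ is a real solution of $\mathcal{M}u_c+(1-\frac1c)u_c-\frac1cf(u_c)=0$ with $u_c(x)\to0$ as $|x|\to\infty$ and $f'(u_c)\not\equiv0$. With $\mathcal{E}^{\lambda,-}$ the Fourier multiplier with symbol $\frac{\lambda}{\lambda-ick}$, $\mathcal{A}^\lambda=\mathcal{M}+1-\frac1c(1-\mathcal{E}^{\lambda,-})(1+f'(u_c))$, acting $H^m\to L^2$. *)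

theory Defs
  imports "HOL-Analysis.Analysis"
begin

text \<open>Square-integrable complex-valued functions on the real line (as functions;
  equalities between L2 elements are understood almost everywhere).\<close>
definition L2 :: "(real \<Rightarrow> complex) \<Rightarrow> bool" where
  "L2 u \<longleftrightarrow> u \<in> borel_measurable lborel \<and> integrable lborel (\<lambda>x. (cmod (u x))\<^sup>2)"

text \<open>Plancherel Fourier transform on L2, convention
  hat u k = lim_{R\<rightarrow>\<infinity>} integral over [-R,R] of u x * exp(-i k x) (limit in L2).\<close>
definition is_fourier :: "(real \<Rightarrow> complex) \<Rightarrow> (real \<Rightarrow> complex) \<Rightarrow> bool" where
  "is_fourier u g \<longleftrightarrow> L2 u \<and> L2 g \<and>
     ((\<lambda>R. \<integral>\<^sup>+ k. ennreal ((cmod (g k - (LINT x:{-R..R}|lborel. u x * cis (- (k * x)))))\<^sup>2) \<partial>lborel)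
        \<longlongrightarrow> 0) at_top"

definition Hm :: "real \<Rightarrow> (real \<Rightarrow> complex) \<Rightarrow> bool" where
  "Hm m u \<longleftrightarrow> L2 u \<and> (\<exists>g. is_fourier u g \<and> L2 (\<lambda>k. complex_of_real ((1 + k\<^sup>2) powr (m / 2)) * g k))"

definition fmult :: "(real \<Rightarrow> complex) \<Rightarrow> (real \<Rightarrow> complex) \<Rightarrow> (real \<Rightarrow> complex) \<Rightarrow> bool" where
  "fmult \<sigma> u v \<longleftrightarrow> (\<exists>g. is_fourier u g \<and> is_fourier v (\<lambda>k. \<sigma> k * g k))"

definition E_symbol :: "real \<Rightarrow> real \<Rightarrow> real \<Rightarrow> complex" where
  "E_symbol c lam k = complex_of_real lam / (complex_of_real lam - \<i> * complex_of_real (c * k))"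

text \<open>Graph of A^lambda = M + 1 - (1/c)(1 - E^{lambda,-})(1 + f'(u_c)):  A_rel ... w v  means  A^lambda w = v (a.e.).\<close>
definition A_rel :: "(real \<Rightarrow> real) \<Rightarrow> real \<Rightarrow> (real \<Rightarrow> real) \<Rightarrow> (real \<Rightarrow> real) \<Rightarrow> real
     \<Rightarrow> (real \<Rightarrow> complex) \<Rightarrow> (real \<Rightarrow> complex) \<Rightarrow> bool" where
  "A_rel \<alpha> c f' uc lam w v \<longleftrightarrow>
     (\<exists>v1 v2. fmult (\<lambda>k. complex_of_real (\<alpha> k)) w v1 \<and>
              fmult (\<lambda>k. 1 - E_symbol c lam k) (\<lambda>x. (1 + complex_of_real (f' (uc x))) * w x) v2 \<and>
              (AE x in lborel. v x = v1 x + w x - v2 x / complex_of_real c))"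

definition is_eigenvalue_A :: "(real \<Rightarrow> real) \<Rightarrow> real \<Rightarrow> real \<Rightarrow> (real \<Rightarrow> real) \<Rightarrow> (real \<Rightarrow> real) \<Rightarrow> real
     \<Rightarrow> complex \<Rightarrow> bool" where
  "is_eigenvalue_A \<alpha> m c f' uc lam z \<longleftrightarrow>
     (\<exists>w. Hm m w \<and> \<not> (AE x in lborel. w x = 0) \<and> A_rel \<alpha> c f' uc lam w (\<lambda>x. z * w x))"

end

theory Submission
  imports Defs "HOL-Probability.Sinc_Integral"
begin

(* Let A^lambda w = z w with Re z <= 0 and w in H^m.  On the Fourier side this reads
     (alpha(k) + 1 - z - (1 - E(k))/c) * w^(k) = (1 - E(k))/c * (f'(u_c) w)^(k),
   where E = lambda/(lambda - i c k).  The coefficient D(k) on the left has real part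
   >= alpha(k) + 1 - 1/c > 0, and for lambda large |1 - E| <= c d |D| at every frequency
   (low frequencies: 1 - E is small; high frequencies: alpha grows).  Hence
   |w^| <= d |(f'(u_c) w)^|, and with two Plancherel inequalities and |f'(u_c)| <= S this gives
   ||w^||^2 <= 2 d^2 S^2 ||w^||^2, so w = 0 once 2 d^2 S^2 < 1.

   Since the Fourier transform is given here only as an L^2 limit of truncated integrals, the
   Plancherel inequalities are proved from scratch:
   - the upper bound ||u^||^2 <= 4 pi ||u||^2, by damping with e^{-d|k|} (whose transform is the
     Abel kernel 2d/(d^2 + t^2)) and a Schur test;
   - Fourier inversion for integrable u^, by testing against interval indicators smoothed with
     the Abel kernel, which yields the lower bound ||u||^2 <= ||u^||^2 / (2 pi).
   Sobolev regularity m >= 1 makes the transform of an eigenfunction integrable and u_c bounded. *)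


lemma borel_measurable_cis[measurable]: "cis \<in> borel_measurable borel"
  by (intro borel_measurable_continuous_onI continuous_intros)

definition energy :: "(real \<Rightarrow> complex) \<Rightarrow> ennreal" where
  "energy u = (\<integral>\<^sup>+x. ennreal ((cmod (u x))\<^sup>2) \<partial>lborel)"

lemma L2_iff: "L2 u \<longleftrightarrow> u \<in> borel_measurable borel \<and> energy u < \<infinity>"
proof -
  have "integrable lborel (\<lambda>x. (cmod (u x))\<^sup>2) \<longleftrightarrow> energy u < \<infinity>" if "u \<in> borel_measurable borel"
    using that unfolding energy_def by (subst integrable_iff_bounded) auto
  moreover have "u \<in> borel_measurable lborel \<longleftrightarrow> u \<in> borel_measurable borel" by simp
  ultimately show ?thesis unfolding L2_def by blast
qed

lemma L2_meas: "L2 u \<Longrightarrow> u \<in> borel_measurable borel"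
  by (simp add: L2_iff)

lemma L2_energy_finite: "L2 u \<Longrightarrow> energy u < \<infinity>"
  by (simp add: L2_iff)

lemma energy_mono:
  assumes "\<And>x. cmod (u x) \<le> cmod (v x)"
  shows "energy u \<le> energy v"
  unfolding energy_def using assms by (intro nn_integral_mono) (auto intro!: power_mono)

lemma norm_mult_le_sq_avg: "cmod (a * b) \<le> ((cmod a)\<^sup>2 + (cmod b)\<^sup>2) / 2"
proof -
  have "0 \<le> (cmod a - cmod b)\<^sup>2" by simp
  then show ?thesis by (simp add: norm_mult power2_eq_square algebra_simps)
qed

lemma L2_prod_integrable:
  assumes "L2 u" "L2 v"
  shows "integrable lborel (\<lambda>x. u x * v x)"
proof (rule Bochner_Integration.integrable_bound)
  show "integrable lborel (\<lambda>x. ((cmod (u x))\<^sup>2 + (cmod (v x))\<^sup>2) / 2)"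
    using assms unfolding L2_def by auto
  show "(\<lambda>x. u x * v x) \<in> borel_measurable lborel"
    using assms unfolding L2_def by auto
  show "AE x in lborel. norm (u x * v x) \<le> norm (((cmod (u x))\<^sup>2 + (cmod (v x))\<^sup>2) / 2)"
    using norm_mult_le_sq_avg by (auto intro!: AE_I2 order_trans[OF norm_mult_le_sq_avg])
qed

lemma norm_lincomb_sq_le: "(cmod (a * x + b * y))\<^sup>2 \<le> 2 * (cmod a)\<^sup>2 * (cmod x)\<^sup>2 + 2 * (cmod b)\<^sup>2 * (cmod y)\<^sup>2"
proof -
  have "cmod (a * x + b * y) \<le> cmod a * cmod x + cmod b * cmod y"
    by (metis norm_mult norm_triangle_ineq)
  then have "(cmod (a * x + b * y))\<^sup>2 \<le> (cmod a * cmod x + cmod b * cmod y)\<^sup>2"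
    by (simp add: power_mono)
  also have "\<dots> \<le> 2 * (cmod a)\<^sup>2 * (cmod x)\<^sup>2 + 2 * (cmod b)\<^sup>2 * (cmod y)\<^sup>2"
    using sum_squares_bound[of "cmod a * cmod x" "cmod b * cmod y"]
    by (simp add: power2_eq_square algebra_simps)
  finally show ?thesis .
qed

lemma energy_lincomb_le:
  "energy (\<lambda>x. a * u x + b * v x) \<le> ennreal (2 * (cmod a)\<^sup>2) * energy u + ennreal (2 * (cmod b)\<^sup>2) * energy v"
  if "u \<in> borel_measurable borel" "v \<in> borel_measurable borel"
proof -
  have "energy (\<lambda>x. a * u x + b * v x) \<le> (\<integral>\<^sup>+x. ennreal (2 * (cmod a)\<^sup>2) * ennreal ((cmod (u x))\<^sup>2)
        + ennreal (2 * (cmod b)\<^sup>2) * ennreal ((cmod (v x))\<^sup>2) \<partial>lborel)"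
    unfolding energy_def
    by (intro nn_integral_mono) (simp add: ennreal_mult'[symmetric] ennreal_plus[symmetric] norm_lincomb_sq_le
        del: ennreal_plus)
  also have "\<dots> = ennreal (2 * (cmod a)\<^sup>2) * energy u + ennreal (2 * (cmod b)\<^sup>2) * energy v"
    unfolding energy_def using that by (simp add: nn_integral_add nn_integral_cmult)
  finally show ?thesis .
qed

lemma L2_lin:
  assumes "L2 u" "L2 v"
  shows "L2 (\<lambda>x. a * u x + b * v x)"
proof -
  have m: "u \<in> borel_measurable borel" "v \<in> borel_measurable borel" using assms L2_meas by auto
  have "energy (\<lambda>x. a * u x + b * v x) < \<infinity>"
    using energy_lincomb_le[OF m, of a b] L2_energy_finite[OF assms(1)] L2_energy_finite[OF assms(2)]
    by (simp add: ennreal_mult_less_top order_le_less_trans)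
  then show ?thesis using m by (simp add: L2_iff)
qed

lemma energy_le_of_AE_norm_le:
  assumes v: "v \<in> borel_measurable borel" and C: "0 \<le> C"
    and le: "AE x in lborel. cmod (u x) \<le> C * cmod (v x)"
  shows "energy u \<le> ennreal (C\<^sup>2) * energy v"
proof -
  have "energy u \<le> (\<integral>\<^sup>+x. ennreal (C\<^sup>2) * ennreal ((cmod (v x))\<^sup>2) \<partial>lborel)"
    unfolding energy_def
  proof (rule nn_integral_mono_AE)
    show "AE x in lborel. ennreal ((cmod (u x))\<^sup>2) \<le> ennreal (C\<^sup>2) * ennreal ((cmod (v x))\<^sup>2)"
      using le
    proof eventually_elim
      case (elim x)
      then have "(cmod (u x))\<^sup>2 \<le> (C * cmod (v x))\<^sup>2" by (intro power_mono) auto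
      then show ?case by (simp add: ennreal_mult'[symmetric] power_mult_distrib)
    qed
  qed
  also have "\<dots> = ennreal (C\<^sup>2) * energy v"
    unfolding energy_def using v by (intro nn_integral_cmult) measurable
  finally show ?thesis .
qed

lemma integrable_mult_bounded:
  fixes f h :: "real \<Rightarrow> complex"
  assumes f: "integrable lborel f" and h: "h \<in> borel_measurable borel" and hb: "\<And>x. cmod (h x) \<le> B"
  shows "integrable lborel (\<lambda>x. f x * h x)"
proof (rule Bochner_Integration.integrable_bound)
  show "integrable lborel (\<lambda>x. B * norm (f x))" using f by auto
  show "(\<lambda>x. f x * h x) \<in> borel_measurable lborel" using f h by auto
  show "AE x in lborel. norm (f x * h x) \<le> norm (B * norm (f x))"
  proof (rule AE_I2)
    fix x
    have B: "0 \<le> B" using hb[of x] norm_ge_zero order_trans by blast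
    have "norm (f x * h x) \<le> B * norm (f x)"
      using mult_left_mono[OF hb[of x], of "norm (f x)"] by (simp add: norm_mult mult.commute)
    also have "\<dots> \<le> norm (B * norm (f x))" using B by simp
    finally show "norm (f x * h x) \<le> norm (B * norm (f x))" .
  qed
qed

definition trunc_ft :: "(real \<Rightarrow> complex) \<Rightarrow> real \<Rightarrow> real \<Rightarrow> complex" where
  "trunc_ft u R k = (LINT x:{-R..R}|lborel. u x * cis (- (k * x)))"

lemma is_fourier_trunc_ft: "is_fourier u g \<longleftrightarrow> L2 u \<and> L2 g \<and>
   ((\<lambda>R. energy (\<lambda>k. g k - trunc_ft u R k)) \<longlongrightarrow> 0) at_top"
  unfolding is_fourier_def energy_def trunc_ft_def ..

lemma L2_set_integrable:
  assumes "L2 u" and c: "c \<in> borel_measurable borel" "\<And>x. cmod (c x) \<le> 1"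
  shows "set_integrable lborel {a..b} (\<lambda>x. u x * c x)"
proof -
  have L: "L2 (\<lambda>x. indicator {a..b} x * c x)"
  proof -
    have "energy (\<lambda>x. indicator {a..b} x * c x) \<le> (\<integral>\<^sup>+x. indicator {a..b} x \<partial>lborel)"
      unfolding energy_def
      by (intro nn_integral_mono) (auto simp: indicator_def norm_mult power_le_one c)
    also have "\<dots> < \<infinity>" by (simp add: emeasure_lborel_Icc_eq)
    finally show ?thesis using c by (simp add: L2_iff)
  qed
  have eq: "(\<lambda>x. indicat_real {a..b} x *\<^sub>R (u x * c x)) = (\<lambda>x. u x * (indicator {a..b} x * c x))"
    by (auto simp: indicator_def fun_eq_iff)
  from L2_prod_integrable[OF assms(1) L] show ?thesis
    unfolding set_integrable_def eq .
qed

lemma trunc_ft_integrand_integrable: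
  "L2 u \<Longrightarrow> set_integrable lborel {a..b} (\<lambda>x. u x * cis (- (k * x)))"
  by (rule L2_set_integrable) auto

lemma trunc_ft_measurable: "L2 u \<Longrightarrow> trunc_ft u R \<in> borel_measurable borel"
  unfolding trunc_ft_def set_lebesgue_integral_def using L2_meas
  by (auto intro!: lborel.borel_measurable_lebesgue_integral simp: split_beta')

lemma is_fourier_error_measurable:
  "is_fourier u g \<Longrightarrow> (\<lambda>k. g k - trunc_ft u R k) \<in> borel_measurable borel"
  using L2_meas trunc_ft_measurable by (auto simp: is_fourier_trunc_ft)

lemma energy_zero_AE:
  assumes "u \<in> borel_measurable borel" and "energy u = 0"
  shows "AE x in lborel. u x = 0"
proof -
  have "AE x in lborel. ennreal ((cmod (u x))\<^sup>2) = 0"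
    using assms unfolding energy_def by (subst (asm) nn_integral_0_iff_AE) auto
  then show ?thesis by eventually_elim simp
qed

lemma trunc_ft_lincomb:
  assumes "L2 u" "L2 v"
  shows "trunc_ft (\<lambda>x. a * u x + b * v x) R k = a * trunc_ft u R k + b * trunc_ft v R k"
proof -
  have "trunc_ft (\<lambda>x. a * u x + b * v x) R k =
     (LINT x:{-R..R}|lborel. a * (u x * cis (- (k * x))) + b * (v x * cis (- (k * x))))"
    unfolding trunc_ft_def by (simp add: algebra_simps)
  also have "\<dots> = a * trunc_ft u R k + b * trunc_ft v R k"
    unfolding trunc_ft_def
    using trunc_ft_integrand_integrable[OF assms(1)] trunc_ft_integrand_integrable[OF assms(2)]
    by (simp add: set_integral_add set_integrable_mult_right set_integral_mult_right)
  finally show ?thesis .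
qed

lemma ennreal_tendsto_0_dominated:
  fixes f g :: "real \<Rightarrow> ennreal"
  assumes "\<And>R. f R \<le> g R" "(g \<longlongrightarrow> 0) at_top"
  shows "(f \<longlongrightarrow> 0) at_top"
  using assms by (intro tendsto_sandwich[OF _ _ tendsto_const assms(2)]) auto

lemma is_fourier_lin:
  assumes "is_fourier u g" "is_fourier v h"
  shows "is_fourier (\<lambda>x. a * u x + b * v x) (\<lambda>k. a * g k + b * h k)"
proof -
  have u: "L2 u" "L2 g" "((\<lambda>R. energy (\<lambda>k. g k - trunc_ft u R k)) \<longlongrightarrow> 0) at_top"
    and v: "L2 v" "L2 h" "((\<lambda>R. energy (\<lambda>k. h k - trunc_ft v R k)) \<longlongrightarrow> 0) at_top"
    using assms by (auto simp: is_fourier_trunc_ft)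
  note meas = is_fourier_error_measurable[OF assms(1)] is_fourier_error_measurable[OF assms(2)]
  have "((\<lambda>R. energy (\<lambda>k. (a * g k + b * h k) - trunc_ft (\<lambda>x. a * u x + b * v x) R k)) \<longlongrightarrow> 0) at_top"
  proof (rule ennreal_tendsto_0_dominated)
    fix R
    have "energy (\<lambda>k. (a * g k + b * h k) - trunc_ft (\<lambda>x. a * u x + b * v x) R k)
        = energy (\<lambda>k. a * (g k - trunc_ft u R k) + b * (h k - trunc_ft v R k))"
      by (simp add: trunc_ft_lincomb[OF u(1) v(1)] algebra_simps)
    also have "\<dots> \<le> ennreal (2 * (cmod a)\<^sup>2) * energy (\<lambda>k. g k - trunc_ft u R k) + ennreal (2 * (cmod b)\<^sup>2) * energy (\<lambda>k. h k - trunc_ft v R k)"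
      by (rule energy_lincomb_le[OF meas])
    finally show "energy (\<lambda>k. (a * g k + b * h k) - trunc_ft (\<lambda>x. a * u x + b * v x) R k) \<le> \<dots>" .
  next
    show "((\<lambda>R. ennreal (2 * (cmod a)\<^sup>2) * energy (\<lambda>k. g k - trunc_ft u R k) + ennreal (2 * (cmod b)\<^sup>2) * energy (\<lambda>k. h k - trunc_ft v R k)) \<longlongrightarrow> 0) at_top"
      using tendsto_add[OF ennreal_tendsto_cmult[OF _ u(3)] ennreal_tendsto_cmult[OF _ v(3)]] by simp
  qed
  then show ?thesis
    using u v by (simp add: is_fourier_trunc_ft L2_lin)
qed

lemma is_fourier_scale:
  assumes "is_fourier u g"
  shows "is_fourier (\<lambda>x. a * u x) (\<lambda>k. a * g k)"
  using is_fourier_lin[OF assms assms, of a 0] by simp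

lemma is_fourier_unique:
  assumes "is_fourier u g" "is_fourier u h"
  shows "AE k in lborel. g k = h k"
proof -
  have u: "L2 u" "L2 g" "((\<lambda>R. energy (\<lambda>k. g k - trunc_ft u R k)) \<longlongrightarrow> 0) at_top"
    and v: "L2 h" "((\<lambda>R. energy (\<lambda>k. h k - trunc_ft u R k)) \<longlongrightarrow> 0) at_top"
    using assms by (auto simp: is_fourier_trunc_ft)
  note meas = is_fourier_error_measurable[OF assms(1)] is_fourier_error_measurable[OF assms(2)]
  have le: "energy (\<lambda>k. g k - h k) \<le> 2 * energy (\<lambda>k. g k - trunc_ft u R k) + 2 * energy (\<lambda>k. h k - trunc_ft u R k)" for R
  proof -
    have "energy (\<lambda>k. g k - h k) = energy (\<lambda>k. 1 * (g k - trunc_ft u R k) + (-1) * (h k - trunc_ft u R k))"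
      by (simp add: algebra_simps)
    also have "\<dots> \<le> ennreal (2 * (cmod 1)\<^sup>2) * energy (\<lambda>k. g k - trunc_ft u R k) + ennreal (2 * (cmod (-1::complex))\<^sup>2) * energy (\<lambda>k. h k - trunc_ft u R k)"
      by (rule energy_lincomb_le[OF meas])
    finally show ?thesis by simp
  qed
  have "((\<lambda>R. 2 * energy (\<lambda>k. g k - trunc_ft u R k) + 2 * energy (\<lambda>k. h k - trunc_ft u R k)) \<longlongrightarrow> 0) at_top"
    using tendsto_add[OF ennreal_tendsto_cmult[OF _ u(3)] ennreal_tendsto_cmult[OF _ v(2)]] by simp
  then have "energy (\<lambda>k. g k - h k) \<le> 0"
    by (intro tendsto_le[OF trivial_limit_at_top_linorder _ tendsto_const]) (auto intro: le always_eventually)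
  then have "AE k in lborel. g k - h k = 0"
    using u(2) v(1) L2_meas by (intro energy_zero_AE) auto
  then show ?thesis by eventually_elim simp
qed

lemma is_fourier_cong_AE:
  assumes "is_fourier u g" "AE x in lborel. u x = v x" "v \<in> borel_measurable borel"
  shows "is_fourier v g"
proof -
  have u: "L2 u" "L2 g" "((\<lambda>R. energy (\<lambda>k. g k - trunc_ft u R k)) \<longlongrightarrow> 0) at_top"
    using assms by (auto simp: is_fourier_trunc_ft)
  have "trunc_ft u R k = trunc_ft v R k" for R k
    unfolding trunc_ft_def set_lebesgue_integral_def
    by (rule integral_cong_AE) (use assms(2) u(1) L2_meas assms(3) in auto)
  moreover have "energy v = energy u"
    unfolding energy_def by (rule nn_integral_cong_AE) (use assms(2) in auto)
  ultimately show ?thesis using u assms(3) by (simp add: is_fourier_trunc_ft L2_iff)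
qed

text \<open>\<open>\<integral>\<^sub>0\<^sup>\<infinity> e\<^sup>z\<^sup>k dk = -1/z\<close> for \<open>Re z < 0\<close>; these half-line integrals assemble the transform of \<open>e\<^sup>-\<^sup>d\<^sup>|\<^sup>k\<^sup>|\<close>.\<close>

lemma exp_halfline_integrable:
  assumes "c < 0"
  shows "set_integrable lborel (einterval 0 \<infinity>) (\<lambda>x::real. exp (c * x))"
proof -
  have "((\<lambda>x. exp (c * x) / c) \<longlongrightarrow> 0) at_top"
  proof -
    have "((\<lambda>x. exp (c * x)) \<longlongrightarrow> 0) at_top"
      using assms by (intro filterlim_compose[OF exp_at_bot] filterlim_tendsto_neg_mult_at_bot[OF tendsto_const])
        (auto intro: filterlim_ident)
    then show ?thesis by (rule tendsto_divide_zero)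
  qed
  then show ?thesis
    using assms
    by (intro interval_integral_FTC_nonneg[where F="\<lambda>x. exp (c * x) / c" and A="1/c" and B=0])
       (auto intro!: derivative_eq_intros tendsto_eq_intros simp: ereal_tendsto_simps zero_ereal_def)
qed

lemma exp_halfline_integral:
  fixes z :: complex
  assumes "Re z < 0"
  shows "has_bochner_integral lborel (\<lambda>k. indicator {0<..} k *\<^sub>R exp (z * complex_of_real k)) (- 1 / z)"
proof -
  have z0: "z \<noteq> 0" using assms by auto
  have int: "set_integrable lborel (einterval 0 \<infinity>) (\<lambda>x. exp (z * complex_of_real x))"
  proof (rule set_integrable_bound[OF exp_halfline_integrable[OF assms]])
    show "AE x in lborel. x \<in> einterval 0 \<infinity> \<longrightarrow> norm (exp (z * complex_of_real x)) \<le> norm (exp (Re z * x))"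
      by (auto simp: norm_exp_eq_Re)
    show "set_borel_measurable lborel (einterval 0 \<infinity>) (\<lambda>x. exp (z * complex_of_real x))"
      unfolding set_borel_measurable_def by measurable
  qed
  have lim: "((\<lambda>x. exp (z * complex_of_real x) / z) \<longlongrightarrow> 0) at_top"
  proof -
    have "((\<lambda>x. exp (Re z * x)) \<longlongrightarrow> 0) at_top"
      using assms by (intro filterlim_compose[OF exp_at_bot] filterlim_tendsto_neg_mult_at_bot[OF tendsto_const])
        (auto intro: filterlim_ident)
    then have "((\<lambda>x. exp (Re z * x) / cmod z) \<longlongrightarrow> 0) at_top"
      by (rule tendsto_divide_zero)
    then have "((\<lambda>x. norm (exp (z * complex_of_real x) / z)) \<longlongrightarrow> 0) at_top"
      by (simp add: norm_divide norm_exp_eq_Re)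
    then show ?thesis by (simp add: tendsto_norm_zero_iff)
  qed
  have der: "((\<lambda>x. exp (z * complex_of_real x) / z) has_vector_derivative exp (z * complex_of_real x)) (at x)" for x
  proof -
    have "((\<lambda>w. exp (z * w) / z) has_field_derivative exp (z * complex_of_real x)) (at (complex_of_real x))"
      using z0 by (auto intro!: derivative_eq_intros)
    from has_vector_derivative_real_field[OF this] show ?thesis .
  qed
  have "(LBINT x=0..\<infinity>. exp (z * complex_of_real x)) = 0 - 1 / z"
    using z0 int lim der
    by (intro interval_integral_FTC_integrable[where F="\<lambda>x. exp (z * complex_of_real x) / z"])
       (auto intro!: tendsto_eq_intros continuous_intros
          simp: ereal_tendsto_simps zero_ereal_def)
  then have "(\<integral>k. indicator {0<..} k *\<^sub>R exp (z * complex_of_real k) \<partial>lborel) = - 1 / z"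
    by (simp add: interval_lebesgue_integral_def set_lebesgue_integral_def zero_ereal_def)
  moreover have "integrable lborel (\<lambda>k. indicator {0<..} k *\<^sub>R exp (z * complex_of_real k))"
    using int by (simp add: set_integrable_def zero_ereal_def)
  ultimately show ?thesis by (simp add: has_bochner_integral_iff)
qed

lemma exp_complex_as_cis: "exp (complex_of_real a + \<i> * complex_of_real b) = complex_of_real (exp a) * cis b"
  by (simp add: exp_add cis_conv_exp exp_of_real)

lemma has_bochner_integral_reflect:
  fixes f :: "real \<Rightarrow> complex"
  assumes "has_bochner_integral lborel f I"
  shows "has_bochner_integral lborel (\<lambda>x. f (- x)) I"
proof -
  have i: "integrable lborel f" and e: "integral\<^sup>L lborel f = I" using assms by (auto simp: has_bochner_integral_iff)
  have "integrable lborel (\<lambda>x. f (0 + (-1) * x))" using i by (subst lborel_integrable_real_affine_iff) auto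
  moreover have "integral\<^sup>L lborel f = \<bar>-1\<bar> *\<^sub>R (\<integral>x. f (0 + (-1) * x) \<partial>lborel)"
    by (rule lborel_integral_real_affine) simp
  ultimately show ?thesis using e by (simp add: has_bochner_integral_iff)
qed

text \<open>The Abel kernel \<open>P\<^sub>d(t) = 2d/(d\<^sup>2 + t\<^sup>2)\<close> (\<open>2\<pi>\<close> times the Poisson kernel).\<close>

definition abel_kernel :: "real \<Rightarrow> real \<Rightarrow> real" where
  "abel_kernel d t = 2 * d / (d\<^sup>2 + t\<^sup>2)"

lemma abel_kernel_fourier:
  assumes d: "d > 0"
  shows "has_bochner_integral lborel (\<lambda>k. complex_of_real (exp (- d * \<bar>k\<bar>)) * cis (k * t))
           (complex_of_real (abel_kernel d t))"
proof -
  define z1 where "z1 = complex_of_real (-d) + \<i> * complex_of_real t"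
  define z2 where "z2 = complex_of_real d + \<i> * complex_of_real t"
  have h1: "has_bochner_integral lborel (\<lambda>k. indicator {0<..} k *\<^sub>R exp (z1 * complex_of_real k)) (- 1 / z1)"
    using d by (intro exp_halfline_integral) (simp add: z1_def)
  have h2': "has_bochner_integral lborel (\<lambda>k. indicator {0<..} k *\<^sub>R exp ((- z2) * complex_of_real k)) (- 1 / (- z2))"
    using d by (intro exp_halfline_integral) (simp add: z2_def)
  have h2: "has_bochner_integral lborel (\<lambda>k. indicator {..<0} k *\<^sub>R exp (z2 * complex_of_real k)) (1 / z2)"
    using has_bochner_integral_reflect[OF h2'] by (simp add: indicator_def)
  have val: "- 1 / z1 + 1 / z2 = complex_of_real (abel_kernel d t)"
  proof -
    have n1: "z1 \<noteq> 0" "z2 \<noteq> 0" using d by (auto simp: z1_def z2_def complex_eq_iff)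
    have e1: "z1 * z2 = complex_of_real (- (d\<^sup>2 + t\<^sup>2))"
      by (simp add: z1_def z2_def complex_eq_iff power2_eq_square)
    have e2: "z1 - z2 = complex_of_real (- (2 * d))" by (simp add: z1_def z2_def)
    have "- 1 / z1 + 1 / z2 = (z1 - z2) / (z1 * z2)" using n1 by (simp add: field_simps)
    also have "\<dots> = complex_of_real (- (2 * d) / (- (d\<^sup>2 + t\<^sup>2)))" by (simp only: e1 e2 of_real_divide)
    also have "\<dots> = complex_of_real (abel_kernel d t)" by (simp only: abel_kernel_def minus_divide_divide)
    finally show ?thesis .
  qed
  have split: "indicator {0<..} k *\<^sub>R exp (z1 * complex_of_real k) + indicator {..<0} k *\<^sub>R exp (z2 * complex_of_real k)
      = complex_of_real (exp (- d * \<bar>k\<bar>)) * cis (k * t)" if "k \<noteq> 0" for k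
  proof -
    have "(if k > 0 then z1 else z2) * complex_of_real k
        = complex_of_real (- d * \<bar>k\<bar>) + \<i> * complex_of_real (k * t)"
      using that by (simp add: z1_def z2_def algebra_simps)
    then have "exp ((if k > 0 then z1 else z2) * complex_of_real k) = complex_of_real (exp (- d * \<bar>k\<bar>)) * cis (k * t)"
      by (simp only: exp_complex_as_cis)
    then show ?thesis using that by (cases "k > 0") (auto simp: indicator_def)
  qed
  have "has_bochner_integral lborel (\<lambda>k. indicator {0<..} k *\<^sub>R exp (z1 * complex_of_real k) +
      indicator {..<0} k *\<^sub>R exp (z2 * complex_of_real k)) (- 1 / z1 + 1 / z2)"
    by (rule has_bochner_integral_add[OF h1 h2])
  moreover have "AE k in lborel. indicator {0<..} k *\<^sub>R exp (z1 * complex_of_real k) +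
      indicator {..<0} k *\<^sub>R exp (z2 * complex_of_real k) = complex_of_real (exp (- d * \<bar>k\<bar>)) * cis (k * t)"
    using AE_lborel_singleton[of 0] by eventually_elim (use split in auto)
  ultimately show ?thesis
    unfolding val by (subst (asm) has_bochner_integral_cong_AE) auto
qed

lemma abel_kernel_nonneg: "d > 0 \<Longrightarrow> 0 \<le> abel_kernel d t"
  by (simp add: abel_kernel_def)

lemma abel_kernel_cont: "d > 0 \<Longrightarrow> continuous_on UNIV (abel_kernel d)"
  unfolding abel_kernel_def by (intro continuous_intros) (auto simp: add_pos_nonneg)

lemma abel_kernel_measurable[measurable]: "d > 0 \<Longrightarrow> abel_kernel d \<in> borel_measurable borel"
  using abel_kernel_cont by (rule borel_measurable_continuous_onI)

lemma inverse_1_plus_square_integrable: "integrable lborel (\<lambda>x::real. inverse (1 + x\<^sup>2))"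
  and inverse_1_plus_square_integral: "(\<integral>x. inverse (1 + x\<^sup>2) \<partial>lborel) = pi"
proof -
  have e: "einterval (-\<infinity>) \<infinity> = (UNIV :: real set)" by (auto simp: einterval_def)
  show "integrable lborel (\<lambda>x::real. inverse (1 + x\<^sup>2))"
    using integrable_inverse_1_plus_square by (simp add: e set_integrable_def)
  show "(\<integral>x. inverse (1 + x\<^sup>2) \<partial>lborel) = pi"
    using LBINT_inverse_1_plus_square
    by (simp add: e interval_lebesgue_integral_def set_lebesgue_integral_def)
qed

lemma abel_kernel_integral:
  assumes d: "d > 0"
  shows "has_bochner_integral lborel (abel_kernel d) (2 * pi)"
proof -
  define f where "f x = (2 / d) * inverse (1 + (x / d)\<^sup>2)" for x
  have fL: "abel_kernel d x = f x" for x
    using d by (simp add: abel_kernel_def f_def field_simps power2_eq_square)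
  have ff: "f (0 + d * x) = (2 / d) * inverse (1 + x\<^sup>2)" for x using d by (simp add: f_def)
  have i1: "integrable lborel (\<lambda>x. f (0 + d * x))"
    unfolding ff using inverse_1_plus_square_integrable by simp
  then have i: "integrable lborel f"
    using lborel_integrable_real_affine_iff[of d f 0] d by simp
  have "integral\<^sup>L lborel f = \<bar>d\<bar> *\<^sub>R (\<integral>x. f (0 + d * x) \<partial>lborel)"
    using d by (intro lborel_integral_real_affine) simp
  also have "\<dots> = 2 * pi" unfolding ff using d by (simp add: inverse_1_plus_square_integral)
  finally show ?thesis using i fL by (simp add: has_bochner_integral_iff fun_eq_iff[symmetric] fL[abs_def])
qed

lemma abel_kernel_nn_integral:
  assumes d: "d > 0"
  shows "(\<integral>\<^sup>+y. ennreal (abel_kernel d (x - y)) \<partial>lborel) = ennreal (2 * pi)"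
proof -
  have "(\<integral>\<^sup>+y. ennreal (abel_kernel d y) \<partial>lborel) = ennreal (2 * pi)"
    using abel_kernel_integral[OF d] abel_kernel_nonneg[OF d]
    by (subst nn_integral_eq_integral) (auto simp: has_bochner_integral_iff)
  moreover have "(\<integral>\<^sup>+y. ennreal (abel_kernel d y) \<partial>lborel) = (\<integral>\<^sup>+y. ennreal (abel_kernel d (x - y)) \<partial>lborel)"
    using nn_integral_real_affine[of "\<lambda>y. ennreal (abel_kernel d y)" "-1" x] d by simp
  ultimately show ?thesis by simp
qed

lemma abel_kernel_far:
  assumes e: "0 < e" "e \<le> 1" and t: "t \<noteq> 0"
  shows "abel_kernel e t \<le> 2 / t\<^sup>2"
proof -
  have t2: "0 < t\<^sup>2" using t by simp
  have "abel_kernel e t = 2 * e / (e\<^sup>2 + t\<^sup>2)" by (simp add: abel_kernel_def)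
  also have "\<dots> \<le> 2 * e / t\<^sup>2"
    using e t2 by (intro divide_left_mono) (auto simp: add_pos_nonneg)
  also have "\<dots> \<le> 2 / t\<^sup>2" using e t2 by (intro divide_right_mono) auto
  finally show ?thesis .
qed

lemma bounded_kernel_product_integrable:
  fixes g h :: "real \<Rightarrow> complex" and K :: "real \<Rightarrow> real \<Rightarrow> complex"
  assumes g: "integrable lborel g" and h: "integrable lborel h"
    and K: "case_prod K \<in> borel_measurable (lborel \<Otimes>\<^sub>M lborel)" and Kb: "\<And>k x. cmod (K k x) \<le> 1"
  shows "integrable (lborel \<Otimes>\<^sub>M lborel) (\<lambda>(k, x). h k * (g x * K k x))"
proof -
  have gm: "g \<in> borel_measurable lborel" and hm: "h \<in> borel_measurable lborel" using g h by auto
  have Kk: "(\<lambda>y. K k y) \<in> borel_measurable lborel" for k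
    using measurable_Pair2[OF K, of k] by simp
  have meas: "(\<lambda>(k, x). h k * (g x * K k x)) \<in> borel_measurable (lborel \<Otimes>\<^sub>M lborel)"
    using gm hm K by measurable
  have bound: "norm (h k * (g y * K k y)) \<le> norm (h k) * norm (g y)" for k y
    using Kb by (auto simp: norm_mult intro!: mult_left_mono mult_right_le_one_le)
  have slice: "integrable lborel (\<lambda>y. h k * (g y * K k y))" for k
  proof (rule Bochner_Integration.integrable_bound)
    show "integrable lborel (\<lambda>y. norm (h k) * norm (g y))" using g by auto
    show "(\<lambda>y. h k * (g y * K k y)) \<in> borel_measurable lborel" using gm Kk[of k] by simp
    show "AE y in lborel. norm (h k * (g y * K k y)) \<le> norm (norm (h k) * norm (g y))"
      using bound by simp
  qed
  show ?thesis
  proof (rule lborel_pair.Fubini_integrable[OF meas])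
    show "integrable lborel (\<lambda>k. \<integral>y. norm (case (k, y) of (k, x) \<Rightarrow> h k * (g x * K k x)) \<partial>lborel)"
    proof (rule Bochner_Integration.integrable_bound)
      show "integrable lborel (\<lambda>k. norm (h k) * (\<integral>x. norm (g x) \<partial>lborel))" using h by auto
      show "(\<lambda>k. \<integral>y. norm (case (k, y) of (k, x) \<Rightarrow> h k * (g x * K k x)) \<partial>lborel) \<in> borel_measurable lborel"
        using meas by (intro lborel.borel_measurable_lebesgue_integral) (auto simp: split_beta')
      show "AE k in lborel. norm (\<integral>y. norm (case (k, y) of (k, x) \<Rightarrow> h k * (g x * K k x)) \<partial>lborel)
              \<le> norm (norm (h k) * (\<integral>x. norm (g x) \<partial>lborel))"
      proof (rule AE_I2)
        fix k
        have "(\<integral>y. norm (h k * (g y * K k y)) \<partial>lborel) \<le> (\<integral>y. norm (h k) * norm (g y) \<partial>lborel)"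
          using slice[of k] g bound by (intro integral_mono) auto
        then show "norm (\<integral>y. norm (case (k, y) of (k, x) \<Rightarrow> h k * (g x * K k x)) \<partial>lborel)
              \<le> norm (norm (h k) * (\<integral>x. norm (g x) \<partial>lborel))"
          by simp
      qed
    qed
    show "AE k in lborel. integrable lborel (\<lambda>y. case (k, y) of (k, x) \<Rightarrow> h k * (g x * K k x))"
      using slice by simp
  qed
qed

lemma integral_swap_bounded_kernel:
  fixes g h :: "real \<Rightarrow> complex" and K :: "real \<Rightarrow> real \<Rightarrow> complex"
  assumes g: "integrable lborel g" and h: "integrable lborel h"
    and K: "case_prod K \<in> borel_measurable (lborel \<Otimes>\<^sub>M lborel)" and Kb: "\<And>k x. cmod (K k x) \<le> 1"
  shows "(\<integral>k. h k * (\<integral>x. g x * K k x \<partial>lborel) \<partial>lborel) = (\<integral>x. g x * (\<integral>k. h k * K k x \<partial>lborel) \<partial>lborel)"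
proof -
  have "(\<integral>k. h k * (\<integral>x. g x * K k x \<partial>lborel) \<partial>lborel) = (\<integral>k. (\<integral>x. h k * (g x * K k x) \<partial>lborel) \<partial>lborel)"
    by simp
  also have "\<dots> = (\<integral>x. (\<integral>k. h k * (g x * K k x) \<partial>lborel) \<partial>lborel)"
    using lborel_pair.Fubini_integral[of "\<lambda>k x. h k * (g x * K k x)"]
      bounded_kernel_product_integrable[OF g h K Kb] by simp
  also have "\<dots> = (\<integral>x. g x * (\<integral>k. h k * K k x \<partial>lborel) \<partial>lborel)"
    by (simp add: algebra_simps integral_mult_left_zero[symmetric] del: integral_mult_left_zero)
  finally show ?thesis .
qed

definition ft :: "(real \<Rightarrow> complex) \<Rightarrow> real \<Rightarrow> complex" where
  "ft g k = (\<integral>x. g x * cis (- (k * x)) \<partial>lborel)"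

lemma ft_measurable[measurable]: "g \<in> borel_measurable borel \<Longrightarrow> ft g \<in> borel_measurable borel"
  unfolding ft_def by (intro lborel.borel_measurable_lebesgue_integral) (simp add: split_beta')

lemma norm_integral_le_nn_integral: "ennreal (norm (\<integral>x. f x \<partial>M)) \<le> (\<integral>\<^sup>+x. norm (f x) \<partial>M)"
  for f :: "'a \<Rightarrow> complex"
proof (cases "integrable M f")
  case True then show ?thesis by (rule integral_norm_bound_ennreal)
next
  case False then show ?thesis by (simp add: not_integrable_integral_eq)
qed

lemma ft_bound: "cmod (ft g k) \<le> (\<integral>x. cmod (g x) \<partial>lborel)" if "integrable lborel g"
proof -
  have "cmod (ft g k) \<le> (\<integral>x. norm (g x * cis (- (k * x))) \<partial>lborel)"
    unfolding ft_def by (rule integral_norm_bound)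
  then show ?thesis by (simp add: norm_mult)
qed

lemma exp_abs_integrable: "(d::real) > 0 \<Longrightarrow> integrable lborel (\<lambda>k. exp (- d * \<bar>k\<bar>))"
proof -
  assume d: "d > 0"
  have "integrable lborel (\<lambda>k. complex_of_real (exp (- d * \<bar>k\<bar>)) * cis (k * 0))"
    using abel_kernel_fourier[OF d, of 0] by (auto simp: has_bochner_integral_iff)
  then show ?thesis by (simp add: complex_of_real_integrable_eq)
qed

lemma exp_abs_cis_integrable: "(d::real) > 0 \<Longrightarrow> integrable lborel (\<lambda>k. complex_of_real (exp (- d * \<bar>k\<bar>)) * cis (k * (t::real)))"
  using abel_kernel_fourier by (auto simp: has_bochner_integral_iff)

lemma damped_ft_integrable:
  assumes g: "integrable lborel g" and d: "d > 0"
  shows "integrable lborel (\<lambda>k. complex_of_real (exp (- d * \<bar>k\<bar>)) * ft g k)"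
proof -
  have gm: "g \<in> borel_measurable borel" using g by auto
  obtain M where M: "\<And>k. cmod (ft g k) \<le> M" using ft_bound[OF g] by blast
  from integrable_mult_bounded[OF exp_abs_cis_integrable[OF d, of 0] ft_measurable[OF gm] M]
  show ?thesis by simp
qed

text \<open>Abel summation of the inversion integral: by Fubini and the transform of the damping factor,
  \<open>\<integral> e\<^sup>-\<^sup>d\<^sup>|\<^sup>k\<^sup>| \<hat>g(k) e\<^sup>i\<^sup>k\<^sup>y dk = \<integral> g(x) P\<^sub>d(y - x) dx\<close>.\<close>

lemma abel_mean_inversion:
  assumes g: "integrable lborel g" and d: "d > 0"
  shows "(\<integral>k. (complex_of_real (exp (- d * \<bar>k\<bar>)) * ft g k) * cis (k * y) \<partial>lborel)
       = (\<integral>x. g x * complex_of_real (abel_kernel d (y - x)) \<partial>lborel)"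
proof -
  define D where "D k = complex_of_real (exp (- d * \<bar>k\<bar>))" for k
  have "(\<integral>k. (D k * ft g k) * cis (k * y) \<partial>lborel) =
        (\<integral>k. (D k * cis (k * y)) * (\<integral>x. g x * cis (- (k * x)) \<partial>lborel) \<partial>lborel)"
    unfolding ft_def by (simp add: ac_simps)
  also have "\<dots> = (\<integral>x. g x * (\<integral>k. (D k * cis (k * y)) * cis (- (k * x)) \<partial>lborel) \<partial>lborel)"
    by (rule integral_swap_bounded_kernel) (use g exp_abs_cis_integrable[OF d] in \<open>auto simp: D_def\<close>)
  also have "\<dots> = (\<integral>x. g x * complex_of_real (abel_kernel d (y - x)) \<partial>lborel)"
  proof (rule Bochner_Integration.integral_cong[OF refl])
    fix x
    have "(\<integral>k. (D k * cis (k * y)) * cis (- (k * x)) \<partial>lborel) =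
          (\<integral>k. complex_of_real (exp (- d * \<bar>k\<bar>)) * cis (k * (y - x)) \<partial>lborel)"
      by (intro Bochner_Integration.integral_cong refl) (simp add: D_def mult.assoc cis_mult right_diff_distrib)
    also have "\<dots> = complex_of_real (abel_kernel d (y - x))"
      using abel_kernel_fourier[OF d, of "y - x"] by (simp add: has_bochner_integral_iff)
    finally show "g x * (\<integral>k. (D k * cis (k * y)) * cis (- (k * x)) \<partial>lborel) = g x * complex_of_real (abel_kernel d (y - x))"
      by simp
  qed
  finally show ?thesis unfolding D_def .
qed

lemma abel_energy_identity:
  fixes g :: "real \<Rightarrow> complex"
  assumes g: "integrable lborel g" and d: "d > 0"
  shows "(\<integral>k. complex_of_real (exp (- d * \<bar>k\<bar>)) * ft g k * cnj (ft g k) \<partial>lborel) =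
         (\<integral>y. cnj (g y) * (\<integral>x. g x * complex_of_real (abel_kernel d (y - x)) \<partial>lborel) \<partial>lborel)"
proof -
  have cnj_ft: "cnj (ft g k) = (\<integral>y. cnj (g y) * cis (k * y) \<partial>lborel)" for k
    unfolding ft_def by (subst Bochner_Integration.integral_cnj[symmetric]) (simp add: cis_cnj)
  have "(\<integral>k. complex_of_real (exp (- d * \<bar>k\<bar>)) * ft g k * cnj (ft g k) \<partial>lborel)
      = (\<integral>k. (complex_of_real (exp (- d * \<bar>k\<bar>)) * ft g k) * (\<integral>y. cnj (g y) * cis (k * y) \<partial>lborel) \<partial>lborel)"
    by (simp add: cnj_ft)
  also have "\<dots> = (\<integral>y. cnj (g y) * (\<integral>k. (complex_of_real (exp (- d * \<bar>k\<bar>)) * ft g k) * cis (k * y) \<partial>lborel) \<partial>lborel)"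
    by (rule integral_swap_bounded_kernel) (use g damped_ft_integrable[OF g d] in auto)
  also have "\<dots> = (\<integral>y. cnj (g y) * (\<integral>x. g x * complex_of_real (abel_kernel d (y - x)) \<partial>lborel) \<partial>lborel)"
    by (simp only: abel_mean_inversion[OF g d])
  finally show ?thesis .
qed

text \<open>Half of a Schur test for the Abel kernel: integrating a function of \<open>y\<close> against
  \<open>P\<^sub>d(y - x)\<close> in \<open>x\<close> multiplies its energy by \<open>\<integral> P\<^sub>d = 2\<pi>\<close>.\<close>

lemma abel_kernel_half_energy:
  assumes d: "d > 0" and gm: "g \<in> borel_measurable borel"
  shows "(\<integral>\<^sup>+y. (\<integral>\<^sup>+x. ennreal ((cmod (g y))\<^sup>2 / 2 * abel_kernel d (y - x)) \<partial>lborel) \<partial>lborel)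
           = ennreal pi * energy g"
proof -
  have "(\<integral>\<^sup>+y. (\<integral>\<^sup>+x. ennreal ((cmod (g y))\<^sup>2 / 2 * abel_kernel d (y - x)) \<partial>lborel) \<partial>lborel)
      = (\<integral>\<^sup>+y. ennreal ((cmod (g y))\<^sup>2 / 2) * (\<integral>\<^sup>+x. ennreal (abel_kernel d (y - x)) \<partial>lborel) \<partial>lborel)"
    using d by (subst nn_integral_cmult[symmetric]) (auto simp: ennreal_mult'[symmetric] intro!: nn_integral_cong)
  also have "\<dots> = (\<integral>\<^sup>+y. ennreal pi * ennreal ((cmod (g y))\<^sup>2) \<partial>lborel)"
    using d by (intro nn_integral_cong) (simp add: abel_kernel_nn_integral ennreal_mult'[symmetric])
  also have "\<dots> = ennreal pi * energy g" unfolding energy_def using gm by (simp add: nn_integral_cmult)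
  finally show ?thesis .
qed

text \<open>Schur test for the Abel kernel:
  \<open>\<integral>\<integral> |g(y)| |g(x)| P\<^sub>d(y - x) dx dy \<le> 2\<pi> \<parallel>g\<parallel>\<^sup>2\<close>, by \<open>|g(y)| |g(x)| \<le> (|g(y)|\<^sup>2 + |g(x)|\<^sup>2)/2\<close>,
  Tonelli and the evenness of \<open>P\<^sub>d\<close>.\<close>

lemma abel_kernel_schur_bound:
  assumes d: "d > 0" and gm: "g \<in> borel_measurable borel"
  shows "(\<integral>\<^sup>+y. ennreal (cmod (g y)) * (\<integral>\<^sup>+x. ennreal (cmod (g x) * abel_kernel d (y - x)) \<partial>lborel) \<partial>lborel)
           \<le> ennreal (2 * pi) * energy g"
proof -
  have half_y: "(\<integral>\<^sup>+y. (\<integral>\<^sup>+x. ennreal ((cmod (g y))\<^sup>2 / 2 * abel_kernel d (y - x)) \<partial>lborel) \<partial>lborel)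
      = ennreal pi * energy g" by (rule abel_kernel_half_energy[OF d gm])
  have "(\<integral>\<^sup>+y. (\<integral>\<^sup>+x. ennreal ((cmod (g x))\<^sup>2 / 2 * abel_kernel d (y - x)) \<partial>lborel) \<partial>lborel)
      = (\<integral>\<^sup>+x. (\<integral>\<^sup>+y. ennreal ((cmod (g x))\<^sup>2 / 2 * abel_kernel d (y - x)) \<partial>lborel) \<partial>lborel)"
    using d gm by (intro lborel_pair.Fubini') simp
  also have "\<dots> = (\<integral>\<^sup>+x. (\<integral>\<^sup>+y. ennreal ((cmod (g x))\<^sup>2 / 2 * abel_kernel d (x - y)) \<partial>lborel) \<partial>lborel)"
    by (intro nn_integral_cong) (simp add: abel_kernel_def power2_commute)
  also have "\<dots> = ennreal pi * energy g" by (rule abel_kernel_half_energy[OF d gm])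
  finally have half_x: "(\<integral>\<^sup>+y. (\<integral>\<^sup>+x. ennreal ((cmod (g x))\<^sup>2 / 2 * abel_kernel d (y - x)) \<partial>lborel) \<partial>lborel)
      = ennreal pi * energy g" .
  have "(\<integral>\<^sup>+y. ennreal (cmod (g y)) * (\<integral>\<^sup>+x. ennreal (cmod (g x) * abel_kernel d (y - x)) \<partial>lborel) \<partial>lborel)
      = (\<integral>\<^sup>+y. (\<integral>\<^sup>+x. ennreal (cmod (g y) * (cmod (g x) * abel_kernel d (y - x))) \<partial>lborel) \<partial>lborel)"
    using d gm by (subst nn_integral_cmult[symmetric]) (auto simp: ennreal_mult'[symmetric] intro!: nn_integral_cong)
  also have "\<dots> \<le> (\<integral>\<^sup>+y. (\<integral>\<^sup>+x. ennreal ((cmod (g y))\<^sup>2 / 2 * abel_kernel d (y - x)) +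
                                     ennreal ((cmod (g x))\<^sup>2 / 2 * abel_kernel d (y - x)) \<partial>lborel) \<partial>lborel)"
  proof (intro nn_integral_mono)
    fix x y
    have "cmod (g y) * cmod (g x) \<le> ((cmod (g y))\<^sup>2 + (cmod (g x))\<^sup>2) / 2"
      using norm_mult_le_sq_avg[of "g y" "g x"] by (simp add: norm_mult)
    from mult_right_mono[OF this abel_kernel_nonneg[OF d, of "y - x"]]
    have "cmod (g y) * (cmod (g x) * abel_kernel d (y - x))
        \<le> (cmod (g y))\<^sup>2 / 2 * abel_kernel d (y - x) + (cmod (g x))\<^sup>2 / 2 * abel_kernel d (y - x)"
      by (simp add: field_simps)
    then show "ennreal (cmod (g y) * (cmod (g x) * abel_kernel d (y - x)))
        \<le> ennreal ((cmod (g y))\<^sup>2 / 2 * abel_kernel d (y - x)) + ennreal ((cmod (g x))\<^sup>2 / 2 * abel_kernel d (y - x))"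
      using abel_kernel_nonneg[OF d, of "y - x"] by (simp add: ennreal_plus[symmetric] del: ennreal_plus)
  qed
  also have "\<dots> = (\<integral>\<^sup>+y. (\<integral>\<^sup>+x. ennreal ((cmod (g y))\<^sup>2 / 2 * abel_kernel d (y - x)) \<partial>lborel) \<partial>lborel) +
                  (\<integral>\<^sup>+y. (\<integral>\<^sup>+x. ennreal ((cmod (g x))\<^sup>2 / 2 * abel_kernel d (y - x)) \<partial>lborel) \<partial>lborel)"
    using d gm by (simp add: nn_integral_add)
  also have "\<dots> = ennreal (2 * pi) * energy g"
    unfolding half_y half_x
    by (simp add: distrib_right[symmetric] ennreal_plus[symmetric] del: ennreal_plus)
  finally show ?thesis .
qed

text \<open>Damped Plancherel inequality for integrable \<open>g\<close>:
  \<open>\<integral> e\<^sup>-\<^sup>d\<^sup>|\<^sup>k\<^sup>| |\<hat>g(k)|\<^sup>2 dk \<le> 2\<pi> \<parallel>g\<parallel>\<^sup>2\<close>, from the Abel identity and the Schur test.\<close>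

lemma abel_energy_le:
  fixes g :: "real \<Rightarrow> complex"
  assumes g: "integrable lborel g" and d: "d > 0"
  shows "(\<integral>\<^sup>+k. ennreal (exp (- d * \<bar>k\<bar>) * (cmod (ft g k))\<^sup>2) \<partial>lborel) \<le> ennreal (2 * pi) * energy g"
proof -
  have gm[measurable]: "g \<in> borel_measurable borel" using g by auto
  obtain M where M: "\<And>k. cmod (ft g k) \<le> M" using ft_bound[OF g] by blast
  have M0: "0 \<le> M" using M[of 0] norm_ge_zero order_trans by blast
  define f where "f k = exp (- d * \<bar>k\<bar>) * (cmod (ft g k))\<^sup>2" for k
  have fint: "integrable lborel f"
  proof (rule Bochner_Integration.integrable_bound)
    show "integrable lborel (\<lambda>k. exp (- d * \<bar>k\<bar>) * M\<^sup>2)" using exp_abs_integrable[OF d] by simp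
    show "f \<in> borel_measurable lborel" unfolding f_def by measurable
    show "AE k in lborel. norm (f k) \<le> norm (exp (- d * \<bar>k\<bar>) * M\<^sup>2)"
      using M M0 by (auto simp: f_def intro!: mult_left_mono power_mono)
  qed
  have f0: "0 \<le> f k" for k by (simp add: f_def)
  have f_eq: "(\<lambda>k. complex_of_real (exp (- d * \<bar>k\<bar>)) * ft g k * cnj (ft g k)) = (\<lambda>k. complex_of_real (f k))"
    by (auto simp: f_def mult.assoc complex_norm_square[symmetric])
  have "(\<integral>\<^sup>+k. ennreal (f k) \<partial>lborel) = ennreal (\<integral>k. f k \<partial>lborel)"
    using fint f0 by (intro nn_integral_eq_integral) auto
  also have "(\<integral>k. f k \<partial>lborel) = norm (\<integral>k. complex_of_real (exp (- d * \<bar>k\<bar>)) * ft g k * cnj (ft g k) \<partial>lborel)"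
    unfolding f_eq using f0 by (simp add: integral_nonneg)
  also have "\<dots> = norm (\<integral>y. cnj (g y) * (\<integral>x. g x * complex_of_real (abel_kernel d (y - x)) \<partial>lborel) \<partial>lborel)"
    by (simp only: abel_energy_identity[OF g d])
  also have "ennreal \<dots> \<le> (\<integral>\<^sup>+y. norm (cnj (g y) * (\<integral>x. g x * complex_of_real (abel_kernel d (y - x)) \<partial>lborel)) \<partial>lborel)"
    by (rule norm_integral_le_nn_integral)
  also have "\<dots> \<le> (\<integral>\<^sup>+y. ennreal (cmod (g y)) * (\<integral>\<^sup>+x. ennreal (cmod (g x) * abel_kernel d (y - x)) \<partial>lborel) \<partial>lborel)"
  proof (rule nn_integral_mono)
    fix y
    have "ennreal (norm (\<integral>x. g x * complex_of_real (abel_kernel d (y - x)) \<partial>lborel))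
          \<le> (\<integral>\<^sup>+x. norm (g x * complex_of_real (abel_kernel d (y - x))) \<partial>lborel)"
      by (rule norm_integral_le_nn_integral)
    also have "\<dots> = (\<integral>\<^sup>+x. ennreal (cmod (g x) * abel_kernel d (y - x)) \<partial>lborel)"
      using abel_kernel_nonneg[OF d] by (intro nn_integral_cong) (simp add: norm_mult)
    finally show "ennreal (norm (cnj (g y) * (\<integral>x. g x * complex_of_real (abel_kernel d (y - x)) \<partial>lborel)))
          \<le> ennreal (cmod (g y)) * (\<integral>\<^sup>+x. ennreal (cmod (g x) * abel_kernel d (y - x)) \<partial>lborel)"
      by (simp add: norm_mult ennreal_mult' mult_left_mono)
  qed
  also have "\<dots> \<le> ennreal (2 * pi) * energy g" by (rule abel_kernel_schur_bound[OF d gm])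
  finally show ?thesis unfolding f_def .
qed

text \<open>Plancherel upper bound for integrable \<open>g\<close>: \<open>\<parallel>\<hat>g\<parallel>\<^sup>2 \<le> 2\<pi> \<parallel>g\<parallel>\<^sup>2\<close>, letting the damping vanish (Fatou).\<close>

lemma energy_ft_le:
  fixes g :: "real \<Rightarrow> complex"
  assumes g: "integrable lborel g"
  shows "energy (ft g) \<le> ennreal (2 * pi) * energy g"
proof -
  have gm[measurable]: "g \<in> borel_measurable borel" using g by auto
  define u where "u n k = ennreal (exp (- inverse (real (Suc n)) * \<bar>k\<bar>) * (cmod (ft g k))\<^sup>2)" for n k
  have um: "u n \<in> borel_measurable lborel" for n unfolding u_def by measurable
  have lim: "liminf (\<lambda>n. u n k) = ennreal ((cmod (ft g k))\<^sup>2)" for k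
  proof (rule lim_imp_Liminf)
    have "(\<lambda>n. exp (- inverse (real (Suc n)) * \<bar>k\<bar>) * (cmod (ft g k))\<^sup>2) \<longlonglongrightarrow> exp (- 0 * \<bar>k\<bar>) * (cmod (ft g k))\<^sup>2"
      by (intro tendsto_intros LIMSEQ_inverse_real_of_nat)
    then show "(\<lambda>n. u n k) \<longlonglongrightarrow> ennreal ((cmod (ft g k))\<^sup>2)"
      unfolding u_def by (intro tendsto_ennrealI) simp
  qed simp
  have "energy (ft g) = (\<integral>\<^sup>+k. liminf (\<lambda>n. u n k) \<partial>lborel)"
    unfolding energy_def lim ..
  also have "\<dots> \<le> liminf (\<lambda>n. integral\<^sup>N lborel (u n))"
    by (rule nn_integral_liminf[OF um])
  also have "\<dots> \<le> liminf (\<lambda>n. ennreal (2 * pi) * energy g)"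
  proof (intro Liminf_mono always_eventually allI)
    fix n
    show "integral\<^sup>N lborel (u n) \<le> ennreal (2 * pi) * energy g"
      unfolding u_def by (rule abel_energy_le[OF g]) simp
  qed
  also have "\<dots> = ennreal (2 * pi) * energy g" by (simp add: Liminf_const)
  finally show ?thesis .
qed

text \<open>The inverse Fourier integral, a conjugate of the forward one; so it obeys the same bounds.\<close>

definition ift :: "(real \<Rightarrow> complex) \<Rightarrow> real \<Rightarrow> complex" where
  "ift g x = (\<integral>k. g k * cis (k * x) \<partial>lborel)"

lemma ift_conv_ft: "ift g x = cnj (ft (\<lambda>k. cnj (g k)) x)"
  unfolding ift_def ft_def
  by (subst Bochner_Integration.integral_cnj[symmetric]) (simp add: cis_cnj mult.commute)

lemma ift_measurable[measurable]: "g \<in> borel_measurable borel \<Longrightarrow> ift g \<in> borel_measurable borel"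
  unfolding ift_def by (intro lborel.borel_measurable_lebesgue_integral) (simp add: split_beta')

lemma ift_bound: "cmod (ift g x) \<le> (\<integral>k. cmod (g k) \<partial>lborel)"
proof -
  have "cmod (ift g x) \<le> (\<integral>k. norm (g k * cis (k * x)) \<partial>lborel)"
    unfolding ift_def by (rule integral_norm_bound)
  then show ?thesis by (simp add: norm_mult)
qed

lemma energy_ift_le:
  fixes g :: "real \<Rightarrow> complex"
  assumes g: "integrable lborel g"
  shows "energy (ift g) \<le> ennreal (2 * pi) * energy g"
proof -
  have "energy (ift g) = energy (ft (\<lambda>k. cnj (g k)))"
    unfolding energy_def ift_conv_ft by simp
  also have "\<dots> \<le> ennreal (2 * pi) * energy (\<lambda>k. cnj (g k))"
    using g by (intro energy_ft_le) simp
  also have "energy (\<lambda>k. cnj (g k)) = energy g" unfolding energy_def by simp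
  finally show ?thesis .
qed

lemma trunc_ft_eq_ft: "trunc_ft u R k = ft (\<lambda>x. indicator {-R..R} x *\<^sub>R u x) k"
  unfolding trunc_ft_def ft_def set_lebesgue_integral_def by (simp add: indicator_def)

lemma L2_truncation_integrable:
  "L2 u \<Longrightarrow> integrable lborel (\<lambda>x. indicator {-R..R} x *\<^sub>R u x)"
  using L2_set_integrable[of u "\<lambda>_. 1" "-R" R] unfolding set_integrable_def by simp

lemma trunc_ft_bounded: "L2 u \<Longrightarrow> \<exists>B. \<forall>k. cmod (trunc_ft u R k) \<le> B"
  unfolding trunc_ft_eq_ft using ft_bound[OF L2_truncation_integrable] by blast

lemma energy_trunc_ft_le:
  assumes u: "L2 u"
  shows "energy (trunc_ft u R) \<le> ennreal (2 * pi) * energy u"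
proof -
  have "energy (trunc_ft u R) \<le> ennreal (2 * pi) * energy (\<lambda>x. indicator {-R..R} x *\<^sub>R u x)"
    unfolding trunc_ft_eq_ft[abs_def] by (rule energy_ft_le[OF L2_truncation_integrable[OF u]])
  also have "energy (\<lambda>x. indicator {-R..R} x *\<^sub>R u x) \<le> energy u"
    by (rule energy_mono) (auto simp: indicator_def)
  finally show ?thesis by (simp add: mult_left_mono)
qed

text \<open>Plancherel upper bound for the \<open>L\<^sup>2\<close> transform: \<open>\<parallel>\<hat>u\<parallel>\<^sup>2 \<le> 4\<pi> \<parallel>u\<parallel>\<^sup>2\<close>, since
  \<open>\<parallel>\<hat>u\<parallel>\<^sup>2 \<le> 2 \<parallel>\<hat>u\<^sub>R\<parallel>\<^sup>2 + 2 \<parallel>\<hat>u - \<hat>u\<^sub>R\<parallel>\<^sup>2\<close> and the second term vanishes as \<open>R \<rightarrow> \<infinity>\<close>.\<close>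

lemma is_fourier_energy_upper:
  assumes F: "is_fourier u g"
  shows "energy g \<le> ennreal (4 * pi) * energy u"
proof -
  have u: "L2 u" and e: "((\<lambda>R. energy (\<lambda>k. g k - trunc_ft u R k)) \<longlongrightarrow> 0) at_top"
    using F by (auto simp: is_fourier_trunc_ft)
  have bound: "energy g \<le> ennreal (4 * pi) * energy u + 2 * energy (\<lambda>k. g k - trunc_ft u R k)" for R
  proof -
    have "energy g = energy (\<lambda>k. 1 * trunc_ft u R k + 1 * (g k - trunc_ft u R k))" by simp
    also have "\<dots> \<le> ennreal (2 * (cmod 1)\<^sup>2) * energy (trunc_ft u R)
        + ennreal (2 * (cmod (1::complex))\<^sup>2) * energy (\<lambda>k. g k - trunc_ft u R k)"
      by (rule energy_lincomb_le[OF trunc_ft_measurable[OF u] is_fourier_error_measurable[OF F]])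
    also have "\<dots> \<le> 2 * (ennreal (2 * pi) * energy u) + 2 * energy (\<lambda>k. g k - trunc_ft u R k)"
      using energy_trunc_ft_le[OF u] by (simp add: add_mono mult_left_mono)
    also have "2 * (ennreal (2 * pi) * energy u) = ennreal (4 * pi) * energy u"
      by (simp add: mult.assoc[symmetric] ennreal_mult'[symmetric] ennreal_numeral[symmetric] del: ennreal_numeral)
    finally show ?thesis .
  qed
  have "((\<lambda>R. ennreal (4 * pi) * energy u + 2 * energy (\<lambda>k. g k - trunc_ft u R k))
      \<longlongrightarrow> ennreal (4 * pi) * energy u + 2 * 0) at_top"
    by (intro tendsto_add tendsto_const ennreal_tendsto_cmult e) auto
  then show ?thesis
    by (intro tendsto_le[OF trivial_limit_at_top_linorder _ tendsto_const]) (auto intro: bound always_eventually)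
qed

lemma ennreal_sq_tendsto0:
  fixes X Y :: "nat \<Rightarrow> ennreal"
  assumes "\<And>n. (X n)\<^sup>2 \<le> Y n" "Y \<longlonglongrightarrow> 0"
  shows "X \<longlonglongrightarrow> 0"
proof (rule order_tendstoI)
  fix a :: ennreal assume "a < 0" then show "eventually (\<lambda>n. a < X n) sequentially" by simp
next
  fix a :: ennreal assume a: "0 < a"
  then have "0 < a\<^sup>2" by (simp add: ennreal_zero_less_mult_iff power2_eq_square)
  with assms(2) have "eventually (\<lambda>n. Y n < a\<^sup>2) sequentially"
    by (rule order_tendstoD)
  then show "eventually (\<lambda>n. X n < a) sequentially"
  proof eventually_elim
    case (elim n)
    then have "(X n)\<^sup>2 < a\<^sup>2" using assms(1)[of n] by (rule le_less_trans[rotated])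
    show "X n < a"
    proof (rule ccontr)
      assume "\<not> X n < a"
      then have "a \<le> X n" by simp
      then have "a\<^sup>2 \<le> (X n)\<^sup>2" by (rule power_mono) simp
      with \<open>(X n)\<^sup>2 < a\<^sup>2\<close> show False by simp
    qed
  qed
qed

text \<open>Energy convergence implies convergence of pairings with a fixed \<open>L\<^sup>2\<close> function
  (Cauchy-Schwarz).\<close>

lemma L2_pairing_tendsto:
  fixes g \<phi> :: "real \<Rightarrow> complex" and F :: "nat \<Rightarrow> real \<Rightarrow> complex"
  assumes e: "(\<lambda>n. energy (\<lambda>k. g k - F n k)) \<longlonglongrightarrow> 0"
    and \<phi>: "L2 \<phi>" and gm: "g \<in> borel_measurable borel" and Fm: "\<And>n. F n \<in> borel_measurable borel"
    and iF: "\<And>n. integrable lborel (\<lambda>k. F n k * \<phi> k)" and ig: "integrable lborel (\<lambda>k. g k * \<phi> k)"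
  shows "(\<lambda>n. \<integral>k. F n k * \<phi> k \<partial>lborel) \<longlonglongrightarrow> (\<integral>k. g k * \<phi> k \<partial>lborel)"
proof -
  have \<phi>m: "\<phi> \<in> borel_measurable borel" using \<phi> L2_meas by auto
  define X where "X n = (\<integral>\<^sup>+k. ennreal (cmod (g k - F n k)) * ennreal (cmod (\<phi> k)) \<partial>lborel)" for n
  have Xlim: "X \<longlonglongrightarrow> 0"
  proof (rule ennreal_sq_tendsto0)
    fix n
    have "(X n)\<^sup>2 \<le> (\<integral>\<^sup>+k. (ennreal (cmod (g k - F n k)))^2 \<partial>lborel) * (\<integral>\<^sup>+k. (ennreal (cmod (\<phi> k)))^2 \<partial>lborel)"
      unfolding X_def using gm Fm \<phi>m by (intro Cauchy_Schwarz_nn_integral) auto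
    also have "\<dots> = energy (\<lambda>k. g k - F n k) * energy \<phi>"
      unfolding energy_def by (simp add: ennreal_power)
    finally show "(X n)\<^sup>2 \<le> energy (\<lambda>k. g k - F n k) * energy \<phi>" .
  next
    have "(\<lambda>n. energy \<phi> * energy (\<lambda>k. g k - F n k)) \<longlonglongrightarrow> energy \<phi> * 0"
      using L2_energy_finite[OF \<phi>] by (intro ennreal_tendsto_cmult e) simp
    then show "(\<lambda>n. energy (\<lambda>k. g k - F n k) * energy \<phi>) \<longlonglongrightarrow> 0" by (simp add: mult.commute)
  qed
  have le: "ennreal (norm ((\<integral>k. F n k * \<phi> k \<partial>lborel) - (\<integral>k. g k * \<phi> k \<partial>lborel))) \<le> X n" for n
  proof -
    have "(\<integral>k. F n k * \<phi> k \<partial>lborel) - (\<integral>k. g k * \<phi> k \<partial>lborel) = (\<integral>k. (F n k - g k) * \<phi> k \<partial>lborel)"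
      using iF ig by (simp add: left_diff_distrib)
    then have "ennreal (norm ((\<integral>k. F n k * \<phi> k \<partial>lborel) - (\<integral>k. g k * \<phi> k \<partial>lborel)))
       \<le> (\<integral>\<^sup>+k. norm ((F n k - g k) * \<phi> k) \<partial>lborel)"
      using norm_integral_le_nn_integral by metis
    also have "\<dots> = X n" unfolding X_def
      by (intro nn_integral_cong) (simp add: norm_mult ennreal_mult' norm_minus_commute)
    finally show ?thesis .
  qed
  have "(\<lambda>n. ennreal (norm ((\<integral>k. F n k * \<phi> k \<partial>lborel) - (\<integral>k. g k * \<phi> k \<partial>lborel)))) \<longlonglongrightarrow> 0"
    by (rule tendsto_sandwich[OF always_eventually always_eventually tendsto_const Xlim]) (simp_all only: le zero_le simp_thms)
  then have "(\<lambda>n. norm ((\<integral>k. F n k * \<phi> k \<partial>lborel) - (\<integral>k. g k * \<phi> k \<partial>lborel))) \<longlonglongrightarrow> 0"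
    by (simp add: ennreal_tendsto_0_iff)
  then show ?thesis by (simp add: tendsto_norm_zero_iff LIM_zero_iff)
qed

text \<open>A locally integrable function with vanishing integrals over all intervals is zero a.e.
  (Lebesgue differentiation).\<close>

lemma AE_zero_if_interval_integrals_zero:
  fixes v :: "real \<Rightarrow> complex"
  assumes vi: "\<And>a b. set_integrable lborel {a..b} v"
    and z: "\<And>a b. a \<le> b \<Longrightarrow> (LINT x:{a..b}|lborel. v x) = 0"
  shows "AE x in lborel. v x = 0"
proof -
  have "v integrable_on cbox a b" for a b
    using set_borel_integral_eq_integral(1)[OF vi[of a b]] by simp
  then obtain N where N: "negligible N"
    and lim: "\<And>x e. \<lbrakk>x \<notin> N; 0 < e\<rbrakk> \<Longrightarrow>
               \<exists>d>0. \<forall>h. 0 < h \<and> h < d \<longrightarrow>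
                         norm(integral (cbox x (x + h *\<^sub>R One)) v /\<^sub>R h ^ DIM(real) - v x) < e"
    using integrable_ccontinuous_explicit[of v] by metis
  have "v x = 0" if "x \<notin> N" for x
  proof (rule ccontr)
    assume "v x \<noteq> 0"
    then have "0 < norm (v x)" by simp
    from lim[OF that this] obtain d where d: "d > 0"
      and dd: "\<And>h. 0 < h \<and> h < d \<longrightarrow> norm(integral (cbox x (x + h *\<^sub>R One)) v /\<^sub>R h ^ DIM(real) - v x) < norm (v x)"
      by blast
    have "integral (cbox x (x + (d/2) *\<^sub>R One)) v = 0"
    proof -
      have "integral {x..x + d/2} v = (LINT t:{x..x + d/2}|lborel. v t)"
        using set_borel_integral_eq_integral(2)[OF vi[of x "x + d/2"]] by simp
      also have "\<dots> = 0" using d by (intro z) simp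
      finally show ?thesis by simp
    qed
    with dd[of "d/2"] d show False by simp
  qed
  then have "AE x in lebesgue. v x = 0"
    using N by (auto simp: eventually_ae_filter_negligible)
  then show ?thesis by (simp add: AE_completion_iff)
qed

definition smoothed_indicator :: "real \<Rightarrow> real \<Rightarrow> real \<Rightarrow> real \<Rightarrow> real" where
  "smoothed_indicator e a b y = (\<integral>x. indicator {a..b} x * abel_kernel e (x - y) \<partial>lborel)"

lemma smoothed_indicator_formula:
  assumes e: "e > 0" and ab: "a \<le> b"
  shows "smoothed_indicator e a b y = 2 * arctan ((b - y) / e) - 2 * arctan ((a - y) / e)"
proof -
  have "(\<integral>x. indicator {a..b} x *\<^sub>R abel_kernel e (x - y) \<partial>lborel) =
      2 * arctan ((b - y) / e) - 2 * arctan ((a - y) / e)"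
  proof (rule integral_FTC_atLeastAtMost[OF ab])
    fix x
    have "((\<lambda>x. 2 * arctan ((x - y) / e)) has_real_derivative abel_kernel e (x - y)) (at x)"
    proof -
      have "((\<lambda>x. 2 * arctan ((x - y) / e)) has_real_derivative 2 * (inverse (1 + ((x - y) / e)\<^sup>2) * (1 / e))) (at x)"
        using e by (auto intro!: derivative_eq_intros DERIV_arctan[THEN DERIV_chain2])
      moreover have "2 * (inverse (1 + ((x - y) / e)\<^sup>2) * (1 / e)) = abel_kernel e (x - y)"
        using e by (simp add: abel_kernel_def field_simps power2_eq_square)
      ultimately show ?thesis by simp
    qed
    then show "((\<lambda>x. 2 * arctan ((x - y) / e)) has_vector_derivative abel_kernel e (x - y)) (at x within {a..b})"
      by (simp add: has_real_derivative_iff_has_vector_derivative[symmetric] has_field_derivative_at_within)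
  next
    show "continuous_on {a..b} (\<lambda>x. abel_kernel e (x - y))"
      using e unfolding abel_kernel_def by (intro continuous_intros) (auto simp: add_pos_nonneg)
  qed
  then show ?thesis by (simp add: smoothed_indicator_def)
qed

lemma smoothed_indicator_cont: "e > 0 \<Longrightarrow> a \<le> b \<Longrightarrow> continuous_on UNIV (smoothed_indicator e a b)"
proof -
  assume e: "e > 0" and ab: "a \<le> b"
  have "smoothed_indicator e a b = (\<lambda>y. 2 * arctan ((b - y) / e) - 2 * arctan ((a - y) / e))"
    using smoothed_indicator_formula[OF e ab] by (simp add: fun_eq_iff)
  then show ?thesis using e by (auto intro!: continuous_intros)
qed

lemma smoothed_indicator_measurable: "e > 0 \<Longrightarrow> a \<le> b \<Longrightarrow> smoothed_indicator e a b \<in> borel_measurable borel"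
  by (rule borel_measurable_continuous_onI[OF smoothed_indicator_cont])

lemma smoothed_indicator_nonneg: "e > 0 \<Longrightarrow> 0 \<le> smoothed_indicator e a b y"
  unfolding smoothed_indicator_def by (intro integral_nonneg_AE) (auto simp: abel_kernel_nonneg)

lemma smoothed_indicator_le: "e > 0 \<Longrightarrow> a \<le> b \<Longrightarrow> smoothed_indicator e a b y \<le> 2 * pi"
  using arctan_bounded[of "(b - y) / e"] arctan_bounded[of "(a - y) / e"]
  by (simp add: smoothed_indicator_formula)

lemma arctan_scaled_lim:
  shows "z > 0 \<Longrightarrow> (\<lambda>n. arctan (z * real (Suc n))) \<longlonglongrightarrow> pi / 2"
    and "z < 0 \<Longrightarrow> (\<lambda>n. arctan (z * real (Suc n))) \<longlonglongrightarrow> - (pi / 2)"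
proof -
  have S: "filterlim (\<lambda>n. real (Suc n)) at_top sequentially"
    by (rule filterlim_compose[OF filterlim_real_sequentially filterlim_Suc])
  show "z > 0 \<Longrightarrow> (\<lambda>n. arctan (z * real (Suc n))) \<longlonglongrightarrow> pi / 2"
    by (rule filterlim_compose[OF tendsto_arctan_at_top filterlim_tendsto_pos_mult_at_top[OF tendsto_const _ S]])
  show "z < 0 \<Longrightarrow> (\<lambda>n. arctan (z * real (Suc n))) \<longlonglongrightarrow> - (pi / 2)"
    by (rule filterlim_compose[OF tendsto_arctan_at_bot filterlim_tendsto_neg_mult_at_bot[OF tendsto_const _ S]])
qed

lemma smoothed_indicator_tendsto:
  assumes ab: "a \<le> b" and ya: "y \<noteq> a" and yb: "y \<noteq> b"
  shows "(\<lambda>n. smoothed_indicator (inverse (real (Suc n))) a b y) \<longlonglongrightarrow> 2 * pi * indicator {a..b} y"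
proof -
  have eq: "smoothed_indicator (inverse (real (Suc n))) a b y = 2 * arctan ((b - y) * real (Suc n)) - 2 * arctan ((a - y) * real (Suc n))" for n
    using ab by (subst smoothed_indicator_formula) (auto simp: divide_inverse)
  show ?thesis
  proof (cases "y < a")
    case True
    then have "(\<lambda>n. 2 * arctan ((b - y) * real (Suc n)) - 2 * arctan ((a - y) * real (Suc n))) \<longlonglongrightarrow> 2 * (pi/2) - 2 * (pi/2)"
      using ab by (intro tendsto_intros arctan_scaled_lim) auto
    then show ?thesis using True unfolding eq by (simp add: indicator_def)
  next
    case False
    show ?thesis
    proof (cases "y > b")
      case True
      then have "(\<lambda>n. 2 * arctan ((b - y) * real (Suc n)) - 2 * arctan ((a - y) * real (Suc n))) \<longlonglongrightarrow> 2 * (- (pi/2)) - 2 * (- (pi/2))"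
        using ab by (intro tendsto_intros arctan_scaled_lim) auto
      then show ?thesis using True unfolding eq by (simp add: indicator_def)
    next
      case False': False
      with False ya yb have y: "a < y" "y < b" by auto
      then have "(\<lambda>n. 2 * arctan ((b - y) * real (Suc n)) - 2 * arctan ((a - y) * real (Suc n))) \<longlonglongrightarrow> 2 * (pi/2) - 2 * (- (pi/2))"
        by (intro tendsto_intros arctan_scaled_lim) auto
      then show ?thesis using y unfolding eq by (simp add: indicator_def)
    qed
  qed
qed

lemma smoothed_indicator_far:
  assumes e: "0 < e" "e \<le> 1" and ab: "a \<le> b" and far: "b - a < \<bar>y - (a + b) / 2\<bar>"
  shows "smoothed_indicator e a b y \<le> 8 * (b - a) / (y - (a + b) / 2)\<^sup>2"
proof -
  define m where "m = (a + b) / 2"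
  define s where "s = \<bar>y - m\<bar>"
  have sab: "b - a < s" using far by (simp add: s_def m_def)
  then have spos: "0 < s" using ab by linarith
  have pt: "indicator {a..b} x * abel_kernel e (x - y) \<le> indicator {a..b} x * (8 / s\<^sup>2)" for x
  proof (cases "x \<in> {a..b}")
    case True
    have "\<bar>x - m\<bar> \<le> (b - a) / 2" using True unfolding m_def by (auto simp: abs_if field_simps)
    moreover have "\<bar>y - m\<bar> \<le> \<bar>x - y\<bar> + \<bar>x - m\<bar>"
      using abs_triangle_ineq[of "y - x" "x - m"] abs_minus_commute[of y x] by simp
    ultimately have xy: "s / 2 \<le> \<bar>x - y\<bar>" using sab by (simp add: s_def)
    then have xy0: "x - y \<noteq> 0" using spos by auto
    have "(s / 2)\<^sup>2 \<le> (x - y)\<^sup>2"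
      using xy spos by (metis abs_le_square_iff abs_of_nonneg less_imp_le zero_le_divide_iff zero_le_numeral)
    then have "2 / (x - y)\<^sup>2 \<le> 2 / (s / 2)\<^sup>2"
      using spos xy0 by (intro divide_left_mono) auto
    then show ?thesis using abel_kernel_far[OF e xy0] True by (simp add: power_divide)
  qed simp
  have "smoothed_indicator e a b y \<le> (\<integral>x. indicator {a..b} x * (8 / s\<^sup>2) \<partial>lborel)"
    unfolding smoothed_indicator_def
  proof (rule integral_mono)
    have "continuous_on {a..b} (\<lambda>x. abel_kernel e (x - y))"
      unfolding abel_kernel_def using e by (intro continuous_intros) (auto simp: add_pos_nonneg)
    from borel_integrable_atLeastAtMost'[OF this]
    show "integrable lborel (\<lambda>x. indicator {a..b} x * abel_kernel e (x - y))"
      by (simp add: set_integrable_def)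
    show "integrable lborel (\<lambda>x. indicator {a..b} x * (8 / s\<^sup>2))"
      by (intro integrable_mult_left) (simp add: integrable_indicator_iff emeasure_lborel_Icc_eq)
  qed (rule pt)
  also have "\<dots> = 8 * (b - a) / (y - m)\<^sup>2" using ab by (simp add: emeasure_lborel_Icc_eq s_def)
  finally show ?thesis by (simp add: m_def)
qed

text \<open>An integrable Cauchy-profile majorant for the smoothed indicators, uniform in \<open>e \<le> 1\<close>;
  it makes dominated convergence available as \<open>e \<rightarrow> 0\<close>.\<close>

lemma smoothed_indicator_decay:
  assumes e: "0 < e" "e \<le> 1" and ab: "a \<le> b"
  defines "L \<equiv> b - a + 1"
  defines "C \<equiv> (1 + L\<^sup>2) * (2 * pi + 8 * (b - a) / L\<^sup>2)"
  shows "smoothed_indicator e a b y \<le> C / (1 + (y - (a + b) / 2)\<^sup>2)"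
proof -
  define s where "s = \<bar>y - (a + b) / 2\<bar>"
  have L: "L \<ge> 1" using ab by (simp add: L_def)
  have s2: "(y - (a + b) / 2)\<^sup>2 = s\<^sup>2" by (simp add: s_def)
  have pos: "0 < 1 + s\<^sup>2" by (simp add: add_pos_nonneg)
  show ?thesis
  proof (cases "s < L")
    case True
    have C1: "2 * pi * (1 + L\<^sup>2) \<le> C"
      using ab mult_left_mono[of "2 * pi" "2 * pi + 8 * (b - a) / L\<^sup>2" "1 + L\<^sup>2"]
      by (simp add: C_def mult.commute add_nonneg_nonneg)
    have "s\<^sup>2 \<le> L\<^sup>2" using True by (intro power_mono) (auto simp: s_def)
    then have "2 * pi \<le> 2 * pi * (1 + L\<^sup>2) / (1 + s\<^sup>2)" using pos by (simp add: field_simps)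
    also have "\<dots> \<le> C / (1 + s\<^sup>2)" using C1 pos by (intro divide_right_mono) auto
    finally show ?thesis using smoothed_indicator_le[OF e(1) ab, of y] by (simp add: s2)
  next
    case False
    then have sL: "L \<le> s" by simp
    have spos: "0 < s" using sL L by simp
    have "smoothed_indicator e a b y \<le> 8 * (b - a) / s\<^sup>2"
      using smoothed_indicator_far[OF e ab] sL by (simp add: s_def L_def)
    also have "\<dots> \<le> C / (1 + s\<^sup>2)"
    proof -
      have "L\<^sup>2 \<le> s\<^sup>2" using sL L by (intro power_mono) auto
      then have key: "L\<^sup>2 * (1 + s\<^sup>2) \<le> s\<^sup>2 * (1 + L\<^sup>2)" by (simp add: algebra_simps)
      have "8 * (b - a) / s\<^sup>2 = 8 * (b - a) * (L\<^sup>2 * (1 + s\<^sup>2)) / (s\<^sup>2 * (L\<^sup>2 * (1 + s\<^sup>2)))"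
        using mult_divide_mult_cancel_right[of "L\<^sup>2 * (1 + s\<^sup>2)" "8 * (b - a)" "s\<^sup>2"] L pos by simp
      also have "\<dots> \<le> 8 * (b - a) * (s\<^sup>2 * (1 + L\<^sup>2)) / (s\<^sup>2 * (L\<^sup>2 * (1 + s\<^sup>2)))"
        using key ab spos L pos by (intro divide_right_mono mult_left_mono) auto
      also have "\<dots> = (s\<^sup>2 * (8 * (b - a) * (1 + L\<^sup>2))) / (s\<^sup>2 * (L\<^sup>2 * (1 + s\<^sup>2)))"
        by (simp only: ac_simps)
      also have "\<dots> = 8 * (b - a) * (1 + L\<^sup>2) / L\<^sup>2 / (1 + s\<^sup>2)"
        using spos by (simp only: mult_divide_mult_cancel_left power_not_zero divide_divide_eq_left)
          simp
      also have "\<dots> \<le> C / (1 + s\<^sup>2)"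
        using ab L pos by (intro divide_right_mono) (auto simp: C_def field_simps)
      finally show ?thesis .
    qed
    finally show ?thesis by (simp add: s2)
  qed
qed

lemma cauchy_bump_integrable: "integrable lborel (\<lambda>y. C / (1 + (y - m)\<^sup>2))" for C m :: real
proof -
  have "integrable lborel (\<lambda>x. inverse (1 + ((- m) + 1 * x)\<^sup>2))"
    using lborel_integrable_real_affine_iff[of 1 "\<lambda>x. inverse (1 + x\<^sup>2)" "- m"] inverse_1_plus_square_integrable by simp
  then show ?thesis by (simp add: divide_inverse)
qed

lemma cauchy_bump_L2:
  fixes C m :: real
  assumes C: "C \<ge> 0"
  shows "L2 (\<lambda>y. complex_of_real (C / (1 + (y - m)\<^sup>2)))"
  unfolding L2_def
proof
  show "(\<lambda>y. complex_of_real (C / (1 + (y - m)\<^sup>2))) \<in> borel_measurable lborel" by measurable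
  show "integrable lborel (\<lambda>x. (cmod (complex_of_real (C / (1 + (x - m)\<^sup>2))))\<^sup>2)"
  proof (rule Bochner_Integration.integrable_bound)
    show "integrable lborel (\<lambda>y. C * (C / (1 + (y - m)\<^sup>2)))" using cauchy_bump_integrable by simp
    show "(\<lambda>x. (cmod (complex_of_real (C / (1 + (x - m)\<^sup>2))))\<^sup>2) \<in> borel_measurable lborel" by measurable
    show "AE x in lborel. norm ((cmod (complex_of_real (C / (1 + (x - m)\<^sup>2))))\<^sup>2) \<le> norm (C * (C / (1 + (x - m)\<^sup>2)))"
    proof (rule AE_I2)
      fix x
      have p: "0 < 1 + (x - m)\<^sup>2" by (simp add: add_pos_nonneg)
      have "C / (1 + (x - m)\<^sup>2) \<le> C" using C p by (simp add: field_simps)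
      then have "(C / (1 + (x - m)\<^sup>2)) * (C / (1 + (x - m)\<^sup>2)) \<le> C * (C / (1 + (x - m)\<^sup>2))"
        using C p by (intro mult_right_mono) auto
      then have "(C / (1 + (x - m)\<^sup>2))\<^sup>2 \<le> C * (C / (1 + (x - m)\<^sup>2))"
        by (simp only: power2_eq_square)
      moreover have "0 \<le> C * (C / (1 + (x - m)\<^sup>2))" using C p by simp
      ultimately show "norm ((cmod (complex_of_real (C / (1 + (x - m)\<^sup>2))))\<^sup>2) \<le> norm (C * (C / (1 + (x - m)\<^sup>2)))"
        by (simp only: norm_of_real power2_abs real_norm_def abs_of_nonneg zero_le_power2)
    qed
  qed
qed

lemma smoothed_indicator_L2:
  assumes e: "0 < e" "e \<le> 1" and ab: "a \<le> b"
  shows "L2 (\<lambda>y. complex_of_real (smoothed_indicator e a b y))"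
proof -
  define L where "L = b - a + 1"
  define C where "C = (1 + L\<^sup>2) * (2 * pi + 8 * (b - a) / L\<^sup>2)"
  have C0: "C \<ge> 0" using ab by (simp add: C_def L_def)
  have H: "L2 (\<lambda>y. complex_of_real (C / (1 + (y - (a + b) / 2)\<^sup>2)))" by (rule cauchy_bump_L2[OF C0])
  have "energy (\<lambda>y. complex_of_real (smoothed_indicator e a b y)) \<le> energy (\<lambda>y. complex_of_real (C / (1 + (y - (a + b) / 2)\<^sup>2)))"
  proof (rule energy_mono)
    fix y
    have "smoothed_indicator e a b y \<le> C / (1 + (y - (a + b) / 2)\<^sup>2)" using smoothed_indicator_decay[OF e ab] by (simp add: C_def L_def)
    moreover have "0 \<le> smoothed_indicator e a b y" using smoothed_indicator_nonneg e by simp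
    moreover have "0 \<le> C / (1 + (y - (a + b) / 2)\<^sup>2)" using C0 by (simp add: add_pos_nonneg)
    ultimately show "cmod (complex_of_real (smoothed_indicator e a b y)) \<le> cmod (complex_of_real (C / (1 + (y - (a + b) / 2)\<^sup>2)))"
      by (simp only: norm_of_real abs_of_nonneg)
  qed
  then have "energy (\<lambda>y. complex_of_real (smoothed_indicator e a b y)) < \<infinity>" using L2_energy_finite[OF H] by (simp add: le_less_trans)
  moreover have "(\<lambda>y. complex_of_real (smoothed_indicator e a b y)) \<in> borel_measurable borel"
    using smoothed_indicator_measurable[OF e(1) ab] by measurable
  ultimately show ?thesis by (simp add: L2_iff)
qed

definition interval_ft :: "real \<Rightarrow> real \<Rightarrow> real \<Rightarrow> complex" where
  "interval_ft a b k = (\<integral>x. complex_of_real (indicator {a..b} x) * cis (k * x) \<partial>lborel)"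

lemma interval_indicator_integrable: "integrable lborel (\<lambda>x. complex_of_real (indicator {a..b} x))" for a b :: real
proof -
  have "integrable lborel (\<lambda>x. indicator {a..b} x :: real)"
    using borel_integrable_atLeastAtMost'[of a b "\<lambda>_. 1::real"] by (simp add: set_integrable_def)
  then show ?thesis by (simp add: complex_of_real_integrable_eq)
qed

lemma interval_ft_measurable[measurable]: "interval_ft a b \<in> borel_measurable borel"
  unfolding interval_ft_def by (intro lborel.borel_measurable_lebesgue_integral) (simp add: split_beta')

lemma interval_ft_bound: "a \<le> b \<Longrightarrow> cmod (interval_ft a b k) \<le> b - a"
proof -
  assume ab: "a \<le> b"
  have "cmod (interval_ft a b k) \<le> (\<integral>x. norm (complex_of_real (indicator {a..b} x) * cis (k * x)) \<partial>lborel)"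
    unfolding interval_ft_def by (rule integral_norm_bound)
  also have "\<dots> = (\<integral>x. indicator {a..b} x \<partial>lborel)"
    by (intro Bochner_Integration.integral_cong) (auto simp: norm_mult indicator_def)
  also have "\<dots> = b - a" using ab by (simp add: emeasure_lborel_Icc_eq)
  finally show ?thesis .
qed

lemma interval_pairing_ift:
  assumes g: "integrable lborel g"
  shows "(\<integral>x. complex_of_real (indicator {a..b} x) * ift g x \<partial>lborel) = (\<integral>k. g k * interval_ft a b k \<partial>lborel)"
  unfolding ift_def interval_ft_def
  by (rule integral_swap_bounded_kernel[symmetric]) (use g interval_indicator_integrable in auto)

lemma damped_interval_ft_integrable:
  assumes e: "e > 0" and ab: "a \<le> b"
  shows "integrable lborel (\<lambda>k. complex_of_real (exp (- e * \<bar>k\<bar>)) * interval_ft a b k)"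
  using integrable_mult_bounded[OF exp_abs_cis_integrable[OF e, of 0] interval_ft_measurable interval_ft_bound[OF ab]] by simp

lemma damped_interval_ft_L2:
  assumes e: "e > 0" and ab: "a \<le> b"
  shows "L2 (\<lambda>k. complex_of_real (exp (- e * \<bar>k\<bar>)) * interval_ft a b k)"
  unfolding L2_def
proof
  show "(\<lambda>k. complex_of_real (exp (- e * \<bar>k\<bar>)) * interval_ft a b k) \<in> borel_measurable lborel" by measurable
  show "integrable lborel (\<lambda>x. (cmod (complex_of_real (exp (- e * \<bar>x\<bar>)) * interval_ft a b x))\<^sup>2)"
  proof (rule Bochner_Integration.integrable_bound)
    show "integrable lborel (\<lambda>k. (b - a)\<^sup>2 * exp (- e * \<bar>k\<bar>))" using exp_abs_integrable[OF e] by simp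
    show "(\<lambda>x. (cmod (complex_of_real (exp (- e * \<bar>x\<bar>)) * interval_ft a b x))\<^sup>2) \<in> borel_measurable lborel"
      by measurable
    show "AE x in lborel. norm ((cmod (complex_of_real (exp (- e * \<bar>x\<bar>)) * interval_ft a b x))\<^sup>2) \<le> norm ((b - a)\<^sup>2 * exp (- e * \<bar>x\<bar>))"
    proof (rule AE_I2)
      fix x
      have E: "0 < exp (- e * \<bar>x\<bar>)" "exp (- e * \<bar>x\<bar>) \<le> 1" using e by auto
      have "(cmod (complex_of_real (exp (- e * \<bar>x\<bar>)) * interval_ft a b x))\<^sup>2 = (exp (- e * \<bar>x\<bar>))\<^sup>2 * (cmod (interval_ft a b x))\<^sup>2"
        by (simp add: norm_mult power_mult_distrib)
      also have "\<dots> \<le> exp (- e * \<bar>x\<bar>) * (b - a)\<^sup>2"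
      proof (rule mult_mono)
        show "(exp (- e * \<bar>x\<bar>))\<^sup>2 \<le> exp (- e * \<bar>x\<bar>)" using E by (simp add: power2_eq_square mult_left_le_one_le)
        show "(cmod (interval_ft a b x))\<^sup>2 \<le> (b - a)\<^sup>2" using interval_ft_bound[OF ab, of x] by (intro power_mono) auto
      qed (use E in auto)
      finally show "norm ((cmod (complex_of_real (exp (- e * \<bar>x\<bar>)) * interval_ft a b x))\<^sup>2) \<le> norm ((b - a)\<^sup>2 * exp (- e * \<bar>x\<bar>))"
        by (simp add: mult.commute)
    qed
  qed
qed

lemma trunc_ft_damped_pairing:
  assumes u: "L2 u" and e: "e > 0" and ab: "a \<le> b"
  shows "(\<integral>k. trunc_ft u R k * (complex_of_real (exp (- e * \<bar>k\<bar>)) * interval_ft a b k) \<partial>lborel)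
       = (\<integral>y. (indicator {-R..R} y *\<^sub>R u y) * complex_of_real (smoothed_indicator e a b y) \<partial>lborel)"
proof -
  define uR where "uR y = indicator {-R..R} y *\<^sub>R u y" for y
  define P where "P k = complex_of_real (exp (- e * \<bar>k\<bar>))" for k
  have uRi: "integrable lborel uR" unfolding uR_def by (rule L2_truncation_integrable[OF u])
  have Pc: "integrable lborel (\<lambda>k. P k * interval_ft a b k)" unfolding P_def by (rule damped_interval_ft_integrable[OF e ab])
  have "(\<integral>k. trunc_ft u R k * (P k * interval_ft a b k) \<partial>lborel) = (\<integral>k. (P k * interval_ft a b k) * (\<integral>y. uR y * cis (- (k * y)) \<partial>lborel) \<partial>lborel)"
    by (simp add: trunc_ft_eq_ft ft_def uR_def mult.commute)
  also have "\<dots> = (\<integral>y. uR y * (\<integral>k. (P k * interval_ft a b k) * cis (- (k * y)) \<partial>lborel) \<partial>lborel)"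
    by (rule integral_swap_bounded_kernel) (use uRi Pc in auto)
  also have "\<dots> = (\<integral>y. uR y * complex_of_real (smoothed_indicator e a b y) \<partial>lborel)"
  proof (rule Bochner_Integration.integral_cong[OF refl])
    fix y
    have "(\<integral>k. (P k * interval_ft a b k) * cis (- (k * y)) \<partial>lborel) =
          (\<integral>k. (P k * cis (- (k * y))) * (\<integral>x. complex_of_real (indicator {a..b} x) * cis (k * x) \<partial>lborel) \<partial>lborel)"
      unfolding interval_ft_def by (simp add: ac_simps)
    also have "\<dots> = (\<integral>x. complex_of_real (indicator {a..b} x) * (\<integral>k. (P k * cis (- (k * y))) * cis (k * x) \<partial>lborel) \<partial>lborel)"
    proof (rule integral_swap_bounded_kernel)
      show "integrable lborel (\<lambda>k. P k * cis (- (k * y)))"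
        using exp_abs_cis_integrable[OF e, of "- y"] by (simp add: P_def)
    qed (use interval_indicator_integrable in auto)
    also have "\<dots> = (\<integral>x. complex_of_real (indicator {a..b} x * abel_kernel e (x - y)) \<partial>lborel)"
    proof (rule Bochner_Integration.integral_cong[OF refl])
      fix x
      have "(\<integral>k. (P k * cis (- (k * y))) * cis (k * x) \<partial>lborel) =
            (\<integral>k. complex_of_real (exp (- e * \<bar>k\<bar>)) * cis (k * (x - y)) \<partial>lborel)"
        by (intro Bochner_Integration.integral_cong refl) (simp add: P_def mult.assoc cis_mult right_diff_distrib)
      also have "\<dots> = complex_of_real (abel_kernel e (x - y))"
        using abel_kernel_fourier[OF e, of "x - y"] by (simp add: has_bochner_integral_iff)
      finally show "complex_of_real (indicator {a..b} x) * (\<integral>k. (P k * cis (- (k * y))) * cis (k * x) \<partial>lborel) =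
          complex_of_real (indicator {a..b} x * abel_kernel e (x - y))" by simp
    qed
    also have "\<dots> = complex_of_real (smoothed_indicator e a b y)"
      unfolding smoothed_indicator_def by (rule integral_complex_of_real)
    finally show "uR y * (\<integral>k. (P k * interval_ft a b k) * cis (- (k * y)) \<partial>lborel) = uR y * complex_of_real (smoothed_indicator e a b y)"
      by simp
  qed
  finally show ?thesis unfolding P_def uR_def .
qed

lemma truncated_pairing_tendsto:
  assumes u: "L2 u" and v: "L2 v"
  shows "(\<lambda>j. \<integral>y. (indicator {- real j..real j} y *\<^sub>R u y) * v y \<partial>lborel) \<longlonglongrightarrow> (\<integral>y. u y * v y \<partial>lborel)"
proof (rule integral_dominated_convergence[where w="\<lambda>y. norm (u y * v y)"])
  have uv: "integrable lborel (\<lambda>y. u y * v y)" by (rule L2_prod_integrable[OF u v])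
  show "integrable lborel (\<lambda>y. norm (u y * v y))" using uv by auto
  show "(\<lambda>y. u y * v y) \<in> borel_measurable lborel" using uv by auto
  show "(\<lambda>y. (indicator {- real j..real j} y *\<^sub>R u y) * v y) \<in> borel_measurable lborel" for j
    using uv by auto
  show "AE y in lborel. (\<lambda>j. (indicator {- real j..real j} y *\<^sub>R u y) * v y) \<longlonglongrightarrow> u y * v y"
  proof (rule AE_I2, rule tendsto_eventually)
    fix y
    have "eventually (\<lambda>j. \<bar>y\<bar> \<le> real j) sequentially"
      using filterlim_real_sequentially by (simp add: filterlim_at_top)
    then show "eventually (\<lambda>j. (indicator {- real j..real j} y *\<^sub>R u y) * v y = u y * v y) sequentially"
      by eventually_elim (auto simp: indicator_def abs_le_iff)
  qed
  show "AE y in lborel. norm ((indicator {- real j..real j} y *\<^sub>R u y) * v y) \<le> norm (u y * v y)" for j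
    by (rule AE_I2) (auto simp: indicator_def norm_mult)
qed

text \<open>It holds for the truncations of \<open>u\<close> by Fubini and passes to the limit on both sides.\<close>

lemma is_fourier_damped_interval_pairing:
  assumes F: "is_fourier u g" and e: "0 < e" "e \<le> 1" and ab: "a \<le> b"
  shows "(\<integral>k. g k * (complex_of_real (exp (- e * \<bar>k\<bar>)) * interval_ft a b k) \<partial>lborel)
       = (\<integral>y. u y * complex_of_real (smoothed_indicator e a b y) \<partial>lborel)"
proof -
  define \<phi> where "\<phi> k = complex_of_real (exp (- e * \<bar>k\<bar>)) * interval_ft a b k" for k
  have u: "L2 u" "L2 g" and lim: "((\<lambda>R. energy (\<lambda>k. g k - trunc_ft u R k)) \<longlongrightarrow> 0) at_top"
    using F by (auto simp: is_fourier_trunc_ft)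
  have \<phi>i: "integrable lborel \<phi>" unfolding \<phi>_def by (rule damped_interval_ft_integrable[OF e(1) ab])
  have \<phi>L: "L2 \<phi>" unfolding \<phi>_def by (rule damped_interval_ft_L2[OF e(1) ab])
  have "(\<lambda>j. \<integral>k. trunc_ft u (real j) k * \<phi> k \<partial>lborel) \<longlonglongrightarrow> (\<integral>k. g k * \<phi> k \<partial>lborel)"
  proof (rule L2_pairing_tendsto[OF _ \<phi>L])
    show "(\<lambda>j. energy (\<lambda>k. g k - trunc_ft u (real j) k)) \<longlonglongrightarrow> 0"
      by (rule filterlim_compose[OF lim filterlim_real_sequentially])
    show "g \<in> borel_measurable borel" using u(2) by (rule L2_meas)
    show "trunc_ft u (real j) \<in> borel_measurable borel" for j by (rule trunc_ft_measurable[OF u(1)])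
    show "integrable lborel (\<lambda>k. trunc_ft u (real j) k * \<phi> k)" for j
    proof -
      obtain B where "\<And>k. cmod (trunc_ft u (real j) k) \<le> B" using trunc_ft_bounded[OF u(1)] by blast
      from integrable_mult_bounded[OF \<phi>i trunc_ft_measurable[OF u(1)] this]
      show ?thesis by (simp add: mult.commute)
    qed
    show "integrable lborel (\<lambda>k. g k * \<phi> k)" by (rule L2_prod_integrable[OF u(2) \<phi>L])
  qed
  moreover have "(\<lambda>j. \<integral>y. (indicator {- real j..real j} y *\<^sub>R u y) * complex_of_real (smoothed_indicator e a b y) \<partial>lborel)
      \<longlonglongrightarrow> (\<integral>y. u y * complex_of_real (smoothed_indicator e a b y) \<partial>lborel)"
    by (rule truncated_pairing_tendsto[OF u(1) smoothed_indicator_L2[OF e ab]])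
  ultimately show ?thesis
    unfolding \<phi>_def trunc_ft_damped_pairing[OF u(1) e(1) ab] by (rule LIMSEQ_unique)
qed

text \<open>Removing the damping: for integrable \<open>g\<close>, dominated convergence.\<close>

lemma damped_interval_pairing_tendsto:
  assumes gi: "integrable lborel g" and ab: "a \<le> b"
  shows "(\<lambda>n. \<integral>k. g k * (complex_of_real (exp (- inverse (real (Suc n)) * \<bar>k\<bar>)) * interval_ft a b k) \<partial>lborel)
           \<longlonglongrightarrow> (\<integral>k. g k * interval_ft a b k \<partial>lborel)"
proof -
  have gm[measurable]: "g \<in> borel_measurable borel" using gi by auto
  show ?thesis
  proof (rule integral_dominated_convergence[where w="\<lambda>k. norm (g k) * (b - a)"])
    show "integrable lborel (\<lambda>k. norm (g k) * (b - a))" using gi by auto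
    show "AE k in lborel. (\<lambda>n. g k * (complex_of_real (exp (- inverse (real (Suc n)) * \<bar>k\<bar>)) * interval_ft a b k))
        \<longlonglongrightarrow> g k * interval_ft a b k"
    proof (rule AE_I2)
      fix k
      have "(\<lambda>n. exp (- inverse (real (Suc n)) * \<bar>k\<bar>)) \<longlonglongrightarrow> exp (- 0 * \<bar>k\<bar>)"
        by (intro tendsto_intros LIMSEQ_inverse_real_of_nat)
      then have damping: "(\<lambda>n. complex_of_real (exp (- inverse (real (Suc n)) * \<bar>k\<bar>))) \<longlonglongrightarrow> 1"
        by (metis (no_types) exp_zero minus_zero mult_zero_left of_real_1 tendsto_of_real)
      show "(\<lambda>n. g k * (complex_of_real (exp (- inverse (real (Suc n)) * \<bar>k\<bar>)) * interval_ft a b k))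
          \<longlonglongrightarrow> g k * interval_ft a b k"
        using tendsto_mult[OF tendsto_const[of "g k"] tendsto_mult[OF damping tendsto_const[of "interval_ft a b k"]]]
        by simp
    qed
    show "AE k in lborel. norm (g k * (complex_of_real (exp (- inverse (real (Suc n)) * \<bar>k\<bar>)) * interval_ft a b k))
        \<le> norm (g k) * (b - a)" for n
    proof (rule AE_I2)
      fix k
      have "norm (complex_of_real (exp (- inverse (real (Suc n)) * \<bar>k\<bar>)) * interval_ft a b k) \<le> 1 * (b - a)"
        unfolding norm_mult by (rule mult_mono) (use interval_ft_bound[OF ab] in auto)
      then show "norm (g k * (complex_of_real (exp (- inverse (real (Suc n)) * \<bar>k\<bar>)) * interval_ft a b k))
          \<le> norm (g k) * (b - a)"
        by (simp add: norm_mult mult_left_mono)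
    qed
  qed measurable
qed

text \<open>As the smoothing width tends to zero, the smoothed indicators tend to \<open>2\<pi> \<chi>\<^sub>[\<^sub>a\<^sub>,\<^sub>b\<^sub>]\<close>
  under an \<open>L\<^sup>2\<close> pairing, dominated by an \<open>L\<^sup>2\<close> Cauchy profile.\<close>

lemma smoothed_indicator_pairing_tendsto:
  assumes u: "L2 u" and ab: "a \<le> b"
  shows "(\<lambda>n. \<integral>y. u y * complex_of_real (smoothed_indicator (inverse (real (Suc n))) a b y) \<partial>lborel)
           \<longlonglongrightarrow> (\<integral>y. u y * complex_of_real (2 * pi * indicator {a..b} y) \<partial>lborel)"
proof -
  define en where "en n = inverse (real (Suc n))" for n
  have en: "0 < en n" "en n \<le> 1" for n by (auto simp: en_def field_simps)
  have um: "u \<in> borel_measurable borel" using u by (rule L2_meas)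
  define L where "L = b - a + 1"
  define Cc where "Cc = (1 + L\<^sup>2) * (2 * pi + 8 * (b - a) / L\<^sup>2)"
  define H where "H y = Cc / (1 + (y - (a + b) / 2)\<^sup>2)" for y
  have Cc0: "Cc \<ge> 0" using ab by (simp add: Cc_def L_def)
  have H0: "0 \<le> H y" for y using Cc0 by (simp add: H_def add_pos_nonneg)
  have uH: "integrable lborel (\<lambda>y. u y * complex_of_real (H y))"
    unfolding H_def by (rule L2_prod_integrable[OF u cauchy_bump_L2[OF Cc0]])
  have "(\<lambda>n. \<integral>y. u y * complex_of_real (smoothed_indicator (en n) a b y) \<partial>lborel)
        \<longlonglongrightarrow> (\<integral>y. u y * complex_of_real (2 * pi * indicator {a..b} y) \<partial>lborel)"
  proof (rule integral_dominated_convergence[where w="\<lambda>y. norm (u y * complex_of_real (H y))"])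
    show "integrable lborel (\<lambda>y. norm (u y * complex_of_real (H y)))" using uH by auto
    show "(\<lambda>y. u y * complex_of_real (2 * pi * indicator {a..b} y)) \<in> borel_measurable lborel"
      using um by measurable
    show "(\<lambda>y. u y * complex_of_real (smoothed_indicator (en n) a b y)) \<in> borel_measurable lborel" for n
      using um smoothed_indicator_measurable[OF en(1) ab, of n] by measurable
    show "AE y in lborel. (\<lambda>n. u y * complex_of_real (smoothed_indicator (en n) a b y))
        \<longlonglongrightarrow> u y * complex_of_real (2 * pi * indicator {a..b} y)"
      using AE_lborel_singleton[of a] AE_lborel_singleton[of b]
    proof eventually_elim
      case (elim y)
      have "(\<lambda>n. smoothed_indicator (en n) a b y) \<longlonglongrightarrow> 2 * pi * indicator {a..b} y"
        unfolding en_def using smoothed_indicator_tendsto[OF ab] elim by auto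
      then show ?case by (intro tendsto_intros)
    qed
    show "AE y in lborel. norm (u y * complex_of_real (smoothed_indicator (en n) a b y))
        \<le> norm (u y * complex_of_real (H y))" for n
    proof (rule AE_I2)
      fix y
      have "smoothed_indicator (en n) a b y \<le> H y"
        using smoothed_indicator_decay[OF en ab] by (simp add: H_def Cc_def L_def)
      then show "norm (u y * complex_of_real (smoothed_indicator (en n) a b y)) \<le> norm (u y * complex_of_real (H y))"
        using smoothed_indicator_nonneg[OF en(1)] H0
        by (simp add: norm_mult mult_left_mono)
    qed
  qed
  then show ?thesis by (simp add: en_def)
qed

lemma fourier_inversion_interval:
  assumes F: "is_fourier u g" and gi: "integrable lborel g" and ab: "a \<le> b"
  shows "(\<integral>x. complex_of_real (indicator {a..b} x) * ift g x \<partial>lborel) =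
      complex_of_real (2 * pi) * (\<integral>x. complex_of_real (indicator {a..b} x) * u x \<partial>lborel)"
proof -
  have u: "L2 u" using F by (simp add: is_fourier_trunc_ft)
  have pairing: "(\<integral>k. g k * (complex_of_real (exp (- inverse (real (Suc n)) * \<bar>k\<bar>)) * interval_ft a b k) \<partial>lborel)
      = (\<integral>y. u y * complex_of_real (smoothed_indicator (inverse (real (Suc n))) a b y) \<partial>lborel)" for n
    by (rule is_fourier_damped_interval_pairing[OF F _ _ ab]) (auto simp: field_simps)
  have "(\<integral>x. complex_of_real (indicator {a..b} x) * ift g x \<partial>lborel) = (\<integral>k. g k * interval_ft a b k \<partial>lborel)"
    by (rule interval_pairing_ift[OF gi])
  also have "\<dots> = (\<integral>y. u y * complex_of_real (2 * pi * indicator {a..b} y) \<partial>lborel)"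
    using damped_interval_pairing_tendsto[OF gi ab] smoothed_indicator_pairing_tendsto[OF u ab]
    unfolding pairing by (rule LIMSEQ_unique)
  also have "\<dots> = (\<integral>y. complex_of_real (2 * pi) * (complex_of_real (indicator {a..b} y) * u y) \<partial>lborel)"
    by (simp add: ac_simps)
  also have "\<dots> = complex_of_real (2 * pi) * (\<integral>x. complex_of_real (indicator {a..b} x) * u x \<partial>lborel)"
    by (rule integral_mult_right_zero)
  finally show ?thesis .
qed

text \<open>Fourier inversion: if \<open>g = \<hat>u\<close> is integrable, then \<open>u = (2\<pi>)\<^sup>-\<^sup>1 \<integral> g(k) e\<^sup>i\<^sup>k\<^sup>x dk\<close> a.e.,
  since both sides have the same integral over every interval.\<close>

lemma fourier_inversion:
  assumes F: "is_fourier u g" and gi: "integrable lborel g"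
  shows "AE x in lborel. u x = ift g x / complex_of_real (2 * pi)"
proof -
  have u: "L2 u" using F by (simp add: is_fourier_trunc_ft)
  define v where "v x = u x - ift g x / complex_of_real (2 * pi)" for x
  have "AE x in lborel. v x = 0"
  proof (rule AE_zero_if_interval_integrals_zero)
    fix a b :: real
    have su: "set_integrable lborel {a..b} u"
      using L2_set_integrable[OF u, of "\<lambda>_. 1" a b] by simp
    have si: "set_integrable lborel {a..b} (ift g)"
    proof -
      have "integrable lborel (\<lambda>x. complex_of_real (indicator {a..b} x) * ift g x)"
        using gi by (intro integrable_mult_bounded[OF interval_indicator_integrable _ ift_bound]) auto
      then show ?thesis unfolding set_integrable_def by (simp add: scaleR_conv_of_real)
    qed
    show "set_integrable lborel {a..b} v"
      unfolding v_def using su si by (intro set_integral_diff set_integrable_divide)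
    assume ab: "a \<le> b"
    have "(LINT x:{a..b}|lborel. v x) = (LINT x:{a..b}|lborel. u x) - (LINT x:{a..b}|lborel. ift g x) / complex_of_real (2 * pi)"
      unfolding v_def using su si by (simp add: set_integral_diff set_integrable_divide set_integral_divide_zero)
    also have "(LINT x:{a..b}|lborel. ift g x) = complex_of_real (2 * pi) * (LINT x:{a..b}|lborel. u x)"
      using fourier_inversion_interval[OF F gi ab] by (simp add: set_lebesgue_integral_def scaleR_conv_of_real)
    finally show "(LINT x:{a..b}|lborel. v x) = 0" by simp
  qed
  then show ?thesis by (simp add: v_def)
qed

text \<open>Plancherel lower bound: if \<open>\<hat>u\<close> is integrable, \<open>\<parallel>u\<parallel>\<^sup>2 \<le> \<parallel>\<hat>u\<parallel>\<^sup>2 / (2\<pi>)\<close>, by inversion and the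
  upper bound for the inverse transform.\<close>

lemma is_fourier_energy_lower:
  assumes F: "is_fourier u g" and gi: "integrable lborel g"
  shows "energy u \<le> ennreal (1 / (2 * pi)) * energy g"
proof -
  have gm[measurable]: "g \<in> borel_measurable borel" using gi by auto
  have "energy u = energy (\<lambda>x. ift g x / complex_of_real (2 * pi))"
    unfolding energy_def by (intro nn_integral_cong_AE) (use fourier_inversion[OF F gi] in auto)
  also have "\<dots> = (ennreal (1 / (2 * pi)))\<^sup>2 * energy (ift g)"
  proof -
    have "energy (\<lambda>x. ift g x / complex_of_real (2 * pi)) = (\<integral>\<^sup>+x. ennreal ((1 / (2 * pi))\<^sup>2) * ennreal ((cmod (ift g x))\<^sup>2) \<partial>lborel)"
      unfolding energy_def by (intro nn_integral_cong) (simp add: ennreal_mult'[symmetric] norm_divide power_divide)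
    also have "\<dots> = ennreal ((1 / (2 * pi))\<^sup>2) * energy (ift g)"
      unfolding energy_def by (intro nn_integral_cmult) measurable
    finally show ?thesis by (simp add: ennreal_power)
  qed
  also have "\<dots> \<le> (ennreal (1 / (2 * pi)))\<^sup>2 * (ennreal (2 * pi) * energy g)"
    by (intro mult_left_mono energy_ift_le[OF gi]) auto
  also have "\<dots> = ennreal (1 / (2 * pi)) * energy g"
  proof -
    have "(ennreal (1 / (2 * pi)))\<^sup>2 * ennreal (2 * pi) = ennreal (1 / (2 * pi))"
      by (simp add: ennreal_power ennreal_mult'[symmetric] power2_eq_square)
    then show ?thesis by (simp add: mult.assoc[symmetric])
  qed
  finally show ?thesis .
qed

lemma norm_le_sobolev_weight:
  assumes m: "m \<ge> 1"
  shows "cmod z \<le> ((cmod (complex_of_real ((1 + k\<^sup>2) powr (m / 2)) * z))\<^sup>2 + inverse (1 + k\<^sup>2)) / 2"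
proof -
  define p where "p = (1 + k\<^sup>2) powr (m / 2)"
  have q: "1 \<le> 1 + k\<^sup>2" by simp
  have q0: "1 + k\<^sup>2 \<noteq> 0" using zero_le_power2[of k] by linarith
  have p0: "0 < p" using q0 by (simp add: p_def)
  have pp: "p * p = (1 + k\<^sup>2) powr m" unfolding p_def
    using q0 by (simp add: powr_add[symmetric])
  have "(1 + k\<^sup>2) powr 1 \<le> (1 + k\<^sup>2) powr m" using m q by (intro powr_mono) auto
  then have "1 + k\<^sup>2 \<le> p * p" using pp by (simp add: add_pos_nonneg)
  then have ip: "inverse (p * p) \<le> inverse (1 + k\<^sup>2)"
    by (intro le_imp_inverse_le) (auto simp: add_pos_nonneg)
  have "cmod z = (p * cmod z) * inverse p" using p0 by simp
  also have "\<dots> \<le> ((p * cmod z)\<^sup>2 + (inverse p)\<^sup>2) / 2"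
    using norm_mult_le_sq_avg[of "complex_of_real (p * cmod z)" "complex_of_real (inverse p)"] p0
    by (simp add: norm_mult abs_mult norm_inverse)
  also have "\<dots> \<le> ((p * cmod z)\<^sup>2 + inverse (1 + k\<^sup>2)) / 2"
    using ip by (simp add: power2_eq_square)
  finally show ?thesis using p0 by (simp add: p_def norm_mult)
qed

lemma Hm_fourier_integrable:
  assumes m: "m \<ge> 1" and H: "Hm m u" and F: "is_fourier u g"
  shows "integrable lborel g"
proof -
  obtain g0 where F0: "is_fourier u g0" and W: "L2 (\<lambda>k. complex_of_real ((1 + k\<^sup>2) powr (m / 2)) * g0 k)"
    using H unfolding Hm_def by blast
  have g0m: "g0 \<in> borel_measurable borel" using F0 by (auto simp: is_fourier_trunc_ft L2_meas)
  have i0: "integrable lborel g0"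
  proof (rule Bochner_Integration.integrable_bound)
    show "integrable lborel (\<lambda>k. ((cmod (complex_of_real ((1 + k\<^sup>2) powr (m / 2)) * g0 k))\<^sup>2 + inverse (1 + k\<^sup>2)) / 2)"
      using W inverse_1_plus_square_integrable unfolding L2_def by auto
    show "g0 \<in> borel_measurable lborel" using g0m by simp
    show "AE x in lborel. norm (g0 x) \<le> norm (((cmod (complex_of_real ((1 + x\<^sup>2) powr (m / 2)) * g0 x))\<^sup>2 + inverse (1 + x\<^sup>2)) / 2)"
      using norm_le_sobolev_weight[OF m] by (auto intro!: AE_I2 order_trans[OF norm_le_sobolev_weight[OF m]])
  qed
  have "AE k in lborel. g0 k = g k" by (rule is_fourier_unique[OF F0 F])
  moreover have "g \<in> borel_measurable lborel" using F by (auto simp: is_fourier_trunc_ft L2_meas)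
  ultimately show ?thesis using i0 g0m by (subst integrable_cong_AE[symmetric]) auto
qed

text \<open>Consequently \<open>H\<^sup>m\<close> functions (\<open>m \<ge> 1\<close>) are essentially bounded, by inversion.\<close>

lemma Hm_essentially_bounded:
  assumes m: "m \<ge> 1" and H: "Hm m u"
  shows "\<exists>C. AE x in lborel. cmod (u x) \<le> C"
proof -
  obtain g0 where F0: "is_fourier u g0" using H unfolding Hm_def by blast
  have i0: "integrable lborel g0" by (rule Hm_fourier_integrable[OF m H F0])
  have "AE x in lborel. cmod (u x) \<le> (\<integral>k. cmod (g0 k) \<partial>lborel) / (2 * pi)"
    using fourier_inversion[OF F0 i0]
  proof eventually_elim
    case (elim x)
    then show ?case using ift_bound[of g0 x] by (simp add: norm_divide divide_right_mono)
  qed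
  then show ?thesis by blast
qed

lemma continuous_comp_essentially_bounded:
  fixes f' :: "real \<Rightarrow> real"
  assumes cont: "continuous_on UNIV f'" and bdd: "AE x in lborel. \<bar>u x\<bar> \<le> C"
  obtains S where "0 \<le> S" "AE x in lborel. \<bar>f' (u x)\<bar> \<le> S"
proof -
  have "bounded (f' ` {-C..C})"
    by (rule compact_imp_bounded[OF compact_continuous_image[OF continuous_on_subset[OF cont] compact_Icc]]) auto
  then obtain S where S: "\<And>y. y \<in> {-C..C} \<Longrightarrow> \<bar>f' y\<bar> \<le> S"
    unfolding bounded_real by blast
  have "AE x in lborel. \<bar>f' (u x)\<bar> \<le> \<bar>S\<bar>"
    using bdd
  proof eventually_elim
    case (elim x)
    then have "u x \<in> {-C..C}" by (auto simp: abs_le_iff)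
    then show ?case using S[of "u x"] by linarith
  qed
  then show thesis by (intro that[of "\<bar>S\<bar>"]) auto
qed

lemma one_minus_E_bounds:
  fixes lam c t :: real
  assumes lam: "lam > 0"
  defines "E \<equiv> complex_of_real lam / (complex_of_real lam - \<i> * complex_of_real t)"
  shows "Re (1 - E) \<le> 1" "cmod (1 - E) \<le> 1" "cmod (1 - E) \<le> \<bar>t\<bar> / lam"
proof -
  define q where "q = complex_of_real lam - \<i> * complex_of_real t"
  have q0: "q \<noteq> 0" using lam by (auto simp: q_def complex_eq_iff)
  have nq: "0 < cmod q" using q0 by simp
  have "0 \<le> Re E"
    unfolding E_def using lam by (simp add: Re_divide)
  then show "Re (1 - E) \<le> 1" by simp
  have "1 - E = - (\<i> * complex_of_real t) / q"
    unfolding E_def q_def[symmetric] using q0 by (simp add: field_simps q_def)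
  then have nN: "cmod (1 - E) = \<bar>t\<bar> / cmod q" by (simp add: norm_divide norm_mult)
  have "lam \<le> cmod q" using abs_Re_le_cmod[of q] lam by (simp add: q_def)
  then show "cmod (1 - E) \<le> \<bar>t\<bar> / lam" unfolding nN using lam nq by (intro divide_left_mono) auto
  have "\<bar>t\<bar> \<le> cmod q" using abs_Im_le_cmod[of q] by (simp add: q_def)
  then show "cmod (1 - E) \<le> 1" unfolding nN using nq by simp
qed

lemma dispersion_Re_lower_bound:
  assumes c: "c > 0" and lam: "lam > 0" and z: "Re z \<le> 0"
  shows "s + (1 - 1 / c) \<le> Re (complex_of_real s + 1 - z - (1 - E_symbol c lam k) / complex_of_real c)"
proof -
  have "Re (1 - E_symbol c lam k) \<le> 1"
    using one_minus_E_bounds(1)[OF lam, of "c * k"] by (simp add: E_symbol_def)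
  then have "Re ((1 - E_symbol c lam k) / complex_of_real c) \<le> 1 / c"
    using c by (simp add: Re_divide_of_real divide_right_mono)
  then show ?thesis using z by simp
qed

text \<open>At low
  frequency \<open>|k| \<le> \<rho>\<close> the factor \<open>1 - E\<close> is small because \<open>\<lambda>\<close> is large; at high frequency
  \<open>|D| \<ge> \<alpha>(k) \<ge> a |k| \<ge> a \<rho>\<close> is large by the growth of the symbol \<open>\<alpha>\<close>.\<close>

lemma dispersion_symbol_bound:
  fixes \<alpha> :: "real \<Rightarrow> real" and z :: complex
  assumes c: "c > 1" and a: "a > 0" and d: "d > 0" and m: "m \<ge> 1"
    and \<rho>: "\<rho> \<ge> 1" "\<rho> \<ge> K" "\<rho> \<ge> 1 / (c * a * d)"
    and lam: "lam > \<rho> / (d * (1 - 1 / c))"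
    and \<alpha>0: "\<alpha> k \<ge> 0" and \<alpha>K: "\<bar>k\<bar> \<ge> K \<Longrightarrow> a * \<bar>k\<bar> powr m \<le> \<alpha> k"
    and z: "Re z \<le> 0"
  defines "D \<equiv> complex_of_real (\<alpha> k) + 1 - z - (1 - E_symbol c lam k) / complex_of_real c"
  shows "D \<noteq> 0" "cmod (1 - E_symbol c lam k) \<le> c * d * cmod D"
proof -
  have c0: "c > 0" using c by simp
  have c1: "0 < 1 - 1 / c" using c by (simp add: field_simps)
  have pos: "0 < d * (1 - 1 / c)" using d c1 by simp
  have \<rho>_lam: "\<rho> < lam * (d * (1 - 1 / c))" using lam unfolding pos_divide_less_eq[OF pos] .
  then have "0 < lam * (d * (1 - 1 / c))" using \<rho>(1) by linarith
  then have lam0: "lam > 0" using pos by (simp add: zero_less_mult_iff)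
  note sf = one_minus_E_bounds[OF lam0, of "c * k", folded E_symbol_def]
  have ReD: "\<alpha> k + (1 - 1 / c) \<le> Re D"
    unfolding D_def by (rule dispersion_Re_lower_bound[OF c0 lam0 z])
  have nD: "Re D \<le> cmod D" by (rule complex_Re_le_cmod)
  have "Re D > 0" using ReD \<alpha>0 c1 by linarith
  then show "D \<noteq> 0" by auto
  show "cmod (1 - E_symbol c lam k) \<le> c * d * cmod D"
  proof (cases "\<bar>k\<bar> \<le> \<rho>")
    case True
    have "cmod (1 - E_symbol c lam k) \<le> \<bar>c * k\<bar> / lam" by (rule sf(3))
    also have "\<dots> \<le> c * \<rho> / lam" using True c0 lam0 by (intro divide_right_mono) (auto simp: abs_mult)
    also have "\<dots> \<le> c * d * (1 - 1 / c)"
    proof -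
      have "\<rho> / lam \<le> d * (1 - 1 / c)" using \<rho>_lam lam0 by (simp add: field_simps)
      then show ?thesis using c0
        by (simp add: mult.assoc mult_left_mono times_divide_eq_right[symmetric] del: times_divide_eq_right)
    qed
    also have "\<dots> \<le> c * d * cmod D"
      using ReD nD \<alpha>0 c0 d by (intro mult_left_mono) auto
    finally show ?thesis .
  next
    case False
    then have k1: "1 \<le> \<bar>k\<bar>" and kK: "K \<le> \<bar>k\<bar>" using \<rho> by auto
    have "\<bar>k\<bar> powr 1 \<le> \<bar>k\<bar> powr m" using k1 m by (intro powr_mono) auto
    then have "a * \<bar>k\<bar> \<le> a * \<bar>k\<bar> powr m" using k1 a by simp
    then have "a * \<rho> \<le> \<alpha> k" using \<alpha>K[OF kK] False a by (smt (verit) mult_left_mono)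
    then have aD: "a * \<rho> \<le> cmod D" using ReD nD c1 by linarith
    have "cmod (1 - E_symbol c lam k) \<le> 1" by (rule sf(2))
    also have "1 \<le> c * d * (a * \<rho>)"
      using \<rho>(3) c0 a d by (simp add: field_simps)
    also have "\<dots> \<le> c * d * cmod D" using aD c0 d by (intro mult_left_mono) auto
    finally show ?thesis .
  qed
qed

lemma ennreal_absorb:
  fixes x :: ennreal
  assumes le: "x \<le> ennreal q * x" and q: "q < 1" and fin: "x < \<infinity>"
  shows "x = 0"
proof -
  obtain r where r: "x = ennreal r" "0 \<le> r" using fin by (cases x) auto
  show ?thesis
  proof (cases "q \<ge> 0")
    case True
    have "ennreal r \<le> ennreal (q * r)" using le r True by (simp add: ennreal_mult')
    then have "r \<le> q * r" using r True by (simp add: ennreal_le_iff)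
    then have "(1 - q) * r \<le> 0" by (simp add: algebra_simps)
    then have "r = 0" using q r by (simp add: mult_le_0_iff)
    then show ?thesis using r by simp
  next
    case False
    then have "ennreal q = 0" by (simp add: ennreal_eq_0_iff)
    then show ?thesis using le by simp
  qed
qed

lemma eigen_equation_fourier:
  assumes c: "c \<noteq> 0" and Fw: "is_fourier w g"
    and A: "A_rel \<alpha> c f' uc lam w (\<lambda>x. z * w x)"
  obtains h where "is_fourier (\<lambda>x. complex_of_real (f' (uc x)) * w x) h"
    and "AE k in lborel. (complex_of_real (\<alpha> k) + 1 - z - (1 - E_symbol c lam k) / complex_of_real c) * g k
           = (1 - E_symbol c lam k) * h k / complex_of_real c"
proof -
  from A obtain v1 v2 where fm1: "fmult (\<lambda>k. complex_of_real (\<alpha> k)) w v1"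
    and fm2: "fmult (\<lambda>k. 1 - E_symbol c lam k) (\<lambda>x. (1 + complex_of_real (f' (uc x))) * w x) v2"
    and eq: "AE x in lborel. z * w x = v1 x + w x - v2 x / complex_of_real c"
    unfolding A_rel_def by blast
  from fm1 obtain g1 where Fw1: "is_fourier w g1"
    and Fv1: "is_fourier v1 (\<lambda>k. complex_of_real (\<alpha> k) * g1 k)"
    unfolding fmult_def by blast
  from fm2 obtain g2 where Fw2: "is_fourier (\<lambda>x. (1 + complex_of_real (f' (uc x))) * w x) g2"
    and Fv2: "is_fourier v2 (\<lambda>k. (1 - E_symbol c lam k) * g2 k)"
    unfolding fmult_def by blast
  define G where "G k = 1 * (1 * (complex_of_real (\<alpha> k) * g1 k) + 1 * g1 k) +
      (- 1 / complex_of_real c) * ((1 - E_symbol c lam k) * g2 k)" for k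
  have "is_fourier (\<lambda>x. 1 * (1 * v1 x + 1 * w x) + (- 1 / complex_of_real c) * v2 x) G"
    unfolding G_def by (intro is_fourier_lin Fv1 Fw1 Fv2)
  then have "is_fourier (\<lambda>x. z * w x) G"
  proof (rule is_fourier_cong_AE)
    show "AE x in lborel. 1 * (1 * v1 x + 1 * w x) + (- 1 / complex_of_real c) * v2 x = z * w x"
      using eq by eventually_elim (simp add: field_simps)
    show "(\<lambda>x. z * w x) \<in> borel_measurable borel"
      using Fw L2_meas by (auto simp: is_fourier_trunc_ft)
  qed
  then have G_eq: "AE k in lborel. G k = z * g k"
    using is_fourier_unique is_fourier_scale[OF Fw] by blast
  have g1_eq: "AE k in lborel. g1 k = g k" by (rule is_fourier_unique[OF Fw1 Fw])
  have "is_fourier (\<lambda>x. 1 * ((1 + complex_of_real (f' (uc x))) * w x) + (-1) * w x)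
      (\<lambda>k. 1 * g2 k + (-1) * g k)"
    by (rule is_fourier_lin[OF Fw2 Fw])
  then have Fh: "is_fourier (\<lambda>x. complex_of_real (f' (uc x)) * w x) (\<lambda>k. g2 k - g k)"
    by (simp add: algebra_simps)
  show thesis
  proof (rule that[OF Fh])
    show "AE k in lborel. (complex_of_real (\<alpha> k) + 1 - z - (1 - E_symbol c lam k) / complex_of_real c) * g k
        = (1 - E_symbol c lam k) * (g2 k - g k) / complex_of_real c"
      using G_eq g1_eq by eventually_elim (use c in \<open>simp add: G_def field_simps\<close>)
  qed
qed

text \<open>Then the eigenvalue equation gives \<open>|\<hat>w| \<le> d |(f'(u\<^sub>c) w)\<^sup>\<and>|\<close>, and the two Plancherel
  inequalities turn this into \<open>\<parallel>\<hat>w\<parallel>\<^sup>2 \<le> 2 d\<^sup>2 S\<^sup>2 \<parallel>\<hat>w\<parallel>\<^sup>2\<close>, forcing \<open>w = 0\<close>.\<close>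

lemma eigenfunction_vanishes:
  assumes c: "c > 0" and d: "d > 0" and m: "m \<ge> 1" and S: "0 \<le> S"
    and fS: "AE x in lborel. \<bar>f' (uc x)\<bar> \<le> S" and small: "2 * d\<^sup>2 * S\<^sup>2 < 1"
    and symb: "\<And>k. complex_of_real (\<alpha> k) + 1 - z - (1 - E_symbol c lam k) / complex_of_real c \<noteq> 0
      \<and> cmod (1 - E_symbol c lam k)
          \<le> c * d * cmod (complex_of_real (\<alpha> k) + 1 - z - (1 - E_symbol c lam k) / complex_of_real c)"
    and Hw: "Hm m w" and A: "A_rel \<alpha> c f' uc lam w (\<lambda>x. z * w x)"
  shows "AE x in lborel. w x = 0"
proof -
  obtain g where Fw: "is_fourier w g" using Hw unfolding Hm_def by blast
  have wm[measurable]: "w \<in> borel_measurable borel" and gL: "L2 g"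
    using Fw L2_meas by (auto simp: is_fourier_trunc_ft)
  obtain h where Fh: "is_fourier (\<lambda>x. complex_of_real (f' (uc x)) * w x) h"
    and eq: "AE k in lborel. (complex_of_real (\<alpha> k) + 1 - z - (1 - E_symbol c lam k) / complex_of_real c) * g k
           = (1 - E_symbol c lam k) * h k / complex_of_real c"
    using eigen_equation_fourier[OF _ Fw A] c by auto
  have hm: "h \<in> borel_measurable borel" using Fh L2_meas by (auto simp: is_fourier_trunc_ft)
  have "AE k in lborel. cmod (g k) \<le> d * cmod (h k)"
    using eq
  proof eventually_elim
    case (elim k)
    define D where "D = complex_of_real (\<alpha> k) + 1 - z - (1 - E_symbol c lam k) / complex_of_real c"
    have "cmod D * cmod (g k) = cmod (1 - E_symbol c lam k) * cmod (h k) / c"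
      using arg_cong[OF elim, of cmod] c by (simp add: D_def norm_mult norm_divide)
    also have "\<dots> \<le> (c * d * cmod D) * cmod (h k) / c"
      using symb[of k] c by (intro divide_right_mono mult_right_mono) (auto simp: D_def)
    also have "\<dots> = cmod D * (d * cmod (h k))" using c by (simp add: field_simps)
    finally show ?case using symb[of k] by (simp add: D_def)
  qed
  then have "energy g \<le> ennreal (d\<^sup>2) * energy h"
    using energy_le_of_AE_norm_le[OF hm] d by simp
  also have "energy h \<le> ennreal (4 * pi) * energy (\<lambda>x. complex_of_real (f' (uc x)) * w x)"
    by (rule is_fourier_energy_upper[OF Fh])
  also have "energy (\<lambda>x. complex_of_real (f' (uc x)) * w x) \<le> ennreal (S\<^sup>2) * energy w"
    using energy_le_of_AE_norm_le[OF wm S] fS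
    by (simp add: norm_mult eventually_mono mult_right_mono)
  also have "energy w \<le> ennreal (1 / (2 * pi)) * energy g"
    by (rule is_fourier_energy_lower[OF Fw Hm_fourier_integrable[OF m Hw Fw]])
  finally have "energy g \<le> ennreal (d\<^sup>2) * (ennreal (4 * pi) * (ennreal (S\<^sup>2) * (ennreal (1 / (2 * pi)) * energy g)))"
    by (simp add: mult_left_mono)
  also have "\<dots> = ennreal (2 * d\<^sup>2 * S\<^sup>2) * energy g"
    by (simp add: ennreal_mult'[symmetric] mult.assoc[symmetric]) (simp add: mult_ac)
  finally have "energy g = 0"
    using small L2_energy_finite[OF gL] by (rule ennreal_absorb)
  then have "energy w = 0"
    using is_fourier_energy_lower[OF Fw Hm_fourier_integrable[OF m Hw Fw]] by simp
  then show ?thesis by (rule energy_zero_AE[OF wm])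
qed

theorem mainTheorem7:
  fixes f f' :: "real \<Rightarrow> real" and \<alpha> :: "real \<Rightarrow> real" and m a b c :: real
    and uc :: "real \<Rightarrow> real"
  assumes f_deriv: "\<And>x. (f has_real_derivative f' x) (at x)"
    and f'_cont: "continuous_on UNIV f'"
    and f0: "f 0 = 0" and f'0: "f' 0 = 0"
    and \<alpha>_nonneg: "\<And>k. \<alpha> k \<ge> 0"
    and \<alpha>_meas: "\<alpha> \<in> borel_measurable borel"
    and \<alpha>_locbdd: "\<And>K. compact K \<Longrightarrow> bounded (\<alpha> ` K)"
    and m_ge: "m \<ge> 1" and a_pos: "a > 0" and b_pos: "b > 0"
    and \<alpha>_growth: "\<exists>K. \<forall>k. \<bar>k\<bar> \<ge> K \<longrightarrow> a * \<bar>k\<bar> powr m \<le> \<alpha> k \<and> \<alpha> k \<le> b * \<bar>k\<bar> powr m"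
    and c_gt: "c > 1"
    and uc_Hm: "Hm m (\<lambda>x. complex_of_real (uc x))"
    and uc_eq: "\<exists>v. fmult (\<lambda>k. complex_of_real (\<alpha> k)) (\<lambda>x. complex_of_real (uc x)) v \<and>
                   (AE x in lborel. v x + complex_of_real ((1 - 1 / c) * uc x - (1 / c) * f (uc x)) = 0)"
    and uc_decay: "(uc \<longlongrightarrow> 0) at_infinity"
    and f'uc_nonzero: "\<not> (AE x in lborel. f' (uc x) = 0)"
  shows "\<exists>\<Lambda>>0. \<forall>lam>\<Lambda>. \<forall>z::complex. Re z \<le> 0 \<longrightarrow> \<not> is_eigenvalue_A \<alpha> m c f' uc lam z"
proof -
  obtain C where "AE x in lborel. cmod (complex_of_real (uc x)) \<le> C"
    using Hm_essentially_bounded[OF m_ge uc_Hm] by blast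
  then obtain S where S: "0 \<le> S" and fS: "AE x in lborel. \<bar>f' (uc x)\<bar> \<le> S"
    using continuous_comp_essentially_bounded[OF f'_cont] by auto
  obtain K where K: "\<And>k. \<bar>k\<bar> \<ge> K \<Longrightarrow> a * \<bar>k\<bar> powr m \<le> \<alpha> k" using \<alpha>_growth by blast
  define d where "d = 1 / (2 * (S + 1))"
  define \<rho> where "\<rho> = max (max 1 K) (1 / (c * a * d))"
  define \<Lambda> where "\<Lambda> = \<rho> / (d * (1 - 1 / c))"
  have d: "d > 0" and dS: "d * S < 1 / 2" using S by (auto simp: d_def field_simps)
  have "(d * S)\<^sup>2 < (1 / 2)\<^sup>2" using dS d S by (intro power_strict_mono) auto
  then have small: "2 * d\<^sup>2 * S\<^sup>2 < 1" by (simp add: power_mult_distrib power_divide)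
  have \<rho>: "\<rho> \<ge> 1" "\<rho> \<ge> K" "\<rho> \<ge> 1 / (c * a * d)" by (auto simp: \<rho>_def)
  have "0 < d * (1 - 1 / c)" using d c_gt by simp
  then have "\<Lambda> > 0" using \<rho>(1) by (simp add: \<Lambda>_def)
  moreover have "\<not> is_eigenvalue_A \<alpha> m c f' uc lam z" if lam: "lam > \<Lambda>" and z: "Re z \<le> 0" for lam z
  proof
    assume "is_eigenvalue_A \<alpha> m c f' uc lam z"
    then obtain w where Hw: "Hm m w" and nz: "\<not> (AE x in lborel. w x = 0)"
      and A: "A_rel \<alpha> c f' uc lam w (\<lambda>x. z * w x)"
      unfolding is_eigenvalue_A_def by blast
    note symb = dispersion_symbol_bound[OF c_gt a_pos d m_ge \<rho> lam[unfolded \<Lambda>_def] \<alpha>_nonneg K z]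
    have "AE x in lborel. w x = 0"
      using c_gt by (intro eigenfunction_vanishes[OF _ d m_ge S fS small _ Hw A] conjI symb) simp
    with nz show False by contradiction
  qed
  ultimately show ?thesis by blast
qed

end
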